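(* Let $n,k\in\mathbb{N}$ and let $\mathcal{C}$ be a class of finite graphs such that $\mathrm{wd}^\otimes_n(G)\le k$ for all $G\in\mathcal{C}$. The following are equivalent: (1) $\mathcal{C}$ is $\mathrm{MSO}_1$-orderable; (2) $\mathcal{C}$ has property $\mathsf{CUT}$; (3) there is $d\in\mathbb{N}$ such that every $G\in\mathcal{C}$ has a $\otimes$-decomposition $(H_v)_{v\in T}$ of height at most $n$ and width at most $k$ in which every vertex of $T$ has outdegree at most $d$; (4) $\mathcal{C}$ is finite (up to isomorphism).
   Context: A graph with ports in $[k]=\{0,\dots,k-1\}$ is a graph with $\pi:V\to[k]$; for $R\subseteq[k]\times[k]$, $G\otimes_R H$ is the disjoint union plus all edges $\{x,y\}$ with $x,y$ in different operands, $x$ of label $a$, $y$ of label $b$, $(a,b)\in R$ (associative, commutative); $\mathrm{Del}$ deletes labels. A $\otimes$-decomposition of $G=\langle V,E\rangle$ of width $k$ is a family $(H_v)_{v\in T}$ of graphs with ports in $[k]$ indexed by a rooted tree $T$ such that: $H_{\mathrm{root}}$ is $G$ with some labelling; $H_v$ has exactly one vertex for each leaf $v$; and for every internal node $v$ with children $u_0,\dots,u_{d-1}$ there is $R_v\subseteq[k]\times[k]$ with $\mathrm{Del}(H_v)=\mathrm{Del}(H_{u_0}\otimes_{R_v}\cdots\otimes_{R_v}H_{u_{d-1}})$ (labels of $H_v$ and its children unrelated). Its height is the height of $T$. $\mathrm{wd}^\otimes_n(G)$ is the least $k$ such that $G$ has a $\otimes$-decomposition of width $\le k$ and height $\le n$.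 $\mathrm{Cut}(G,k)$ is the maximal $m$ with $G\cong\mathrm{Del}(H_0\otimes_R\cdots\otimes_R H_{m-1})$ for nonempty $H_i$ with ports in $[k]$ and some $R$; $\mathcal{C}$ has $\mathsf{CUT}$ if there is $f$ with $\mathrm{Cut}(G,k)\le f(k)$ for all $G\in\mathcal{C}$, $k$. $\mathcal{C}$ is $\mathrm{MSO}_1$-orderable if there is an MSO-formula $\varphi(x,y;Z_0,\dots,Z_{m-1})$ such that for every nonempty $G\in\mathcal{C}$ there are vertex sets $P_i$ with $\{(a,b):\lfloor G\rfloor\models\varphi(a,b;\bar P)\}$ a linear order on the vertices, where $\lfloor G\rfloor$ is the structure with universe $V$ and edge relation. *)

theory Defs
  imports Main "HOL-Library.Extended_Nat"
begin

text \<open>A (finite, simple, undirected) graph on natural-number vertices: a vertex set and a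
set of edges, each edge a two-element subset of the vertex set.\<close>

type_synonym graph = "nat set \<times> nat set set"

definition finite_graph :: "graph \<Rightarrow> bool" where
  "finite_graph G \<longleftrightarrow> finite (fst G) \<and>
     snd G \<subseteq> {{x, y} | x y. x \<in> fst G \<and> y \<in> fst G \<and> x \<noteq> y}"

definition graph_iso :: "graph \<Rightarrow> graph \<Rightarrow> bool" where
  "graph_iso G G' \<longleftrightarrow> (\<exists>f. bij_betw f (fst G) (fst G') \<and>
     (\<forall>x\<in>fst G. \<forall>y\<in>fst G. {x, y} \<in> snd G \<longleftrightarrow> {f x, f y} \<in> snd G'))"

record pgraph =
  pV :: "nat set"
  pE :: "nat set set"
  pl :: "nat \<Rightarrow> nat"

definition Del :: "pgraph \<Rightarrow> graph" where
  "Del H = (pV H, pE H)"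

definition ports_in :: "nat \<Rightarrow> pgraph \<Rightarrow> bool" where
  "ports_in k H \<longleftrightarrow> finite_graph (Del H) \<and> (\<forall>v\<in>pV H. pl H v < k)"

definition disjoint_ops :: "pgraph list \<Rightarrow> bool" where
  "disjoint_ops Hs \<longleftrightarrow> (\<forall>i<length Hs. \<forall>j<length Hs. i \<noteq> j \<longrightarrow> pV (Hs!i) \<inter> pV (Hs!j) = {})"

text \<open>\<open>tensor_Del R Hs\<close> is \<open>Del(H_0 \<otimes>_R \<dots> \<otimes>_R H_{d-1})\<close>.\<close>

definition tensor_Del :: "(nat \<times> nat) set \<Rightarrow> pgraph list \<Rightarrow> graph" where
  "tensor_Del R Hs =
     ((\<Union>H\<in>set Hs. pV H),
      (\<Union>H\<in>set Hs. pE H) \<union>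
      {{x, y} | x y i j. i < length Hs \<and> j < length Hs \<and> i \<noteq> j \<and>
         x \<in> pV (Hs!i) \<and> y \<in> pV (Hs!j) \<and> (pl (Hs!i) x, pl (Hs!j) y) \<in> R})"

datatype 'a dtree = DNode 'a "'a dtree list"

fun dlabel :: "'a dtree \<Rightarrow> 'a" where
  "dlabel (DNode x ts) = x"

fun dchildren :: "'a dtree \<Rightarrow> 'a dtree list" where
  "dchildren (DNode x ts) = ts"

fun dheight :: "'a dtree \<Rightarrow> nat" where
  "dheight (DNode x ts) = (if ts = [] then 0 else Suc (Max (set (map dheight ts))))"

inductive outdeg_le :: "nat \<Rightarrow> 'a dtree \<Rightarrow> bool" for d where
  "length ts \<le> d \<Longrightarrow> (\<forall>t\<in>set ts. outdeg_le d t) \<Longrightarrow> outdeg_le d (DNode x ts)"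

text \<open>Each tree node carries the graph with ports \<open>H_v\<close> and the relation \<open>R_v\<close>
(the latter is irrelevant at leaves). \<open>valid_dec k t\<close>: \<open>t\<close> is a \<otimes>-decomposition
(of the graph \<open>Del\<close> of its root) of width at most \<open>k\<close>.\<close>

inductive valid_dec :: "nat \<Rightarrow> (pgraph \<times> (nat \<times> nat) set) dtree \<Rightarrow> bool" for k where
  leaf: "ports_in k H \<Longrightarrow> card (pV H) = 1 \<Longrightarrow> valid_dec k (DNode (H, R) [])"
| node: "ports_in k H \<Longrightarrow> ts \<noteq> [] \<Longrightarrow> (\<forall>t\<in>set ts. valid_dec k t) \<Longrightarrow>
         disjoint_ops (map (fst \<circ> dlabel) ts) \<Longrightarrow>
         Del H = tensor_Del R (map (fst \<circ> dlabel) ts) \<Longrightarrow>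
         valid_dec k (DNode (H, R) ts)"

definition is_dec_of :: "graph \<Rightarrow> nat \<Rightarrow> (pgraph \<times> (nat \<times> nat) set) dtree \<Rightarrow> bool" where
  "is_dec_of G k t \<longleftrightarrow> valid_dec k t \<and> Del (fst (dlabel t)) = G"

definition wd_tensor :: "nat \<Rightarrow> graph \<Rightarrow> enat" where
  "wd_tensor n G = (if \<exists>k t. is_dec_of G k t \<and> dheight t \<le> n
     then enat (LEAST k. \<exists>t. is_dec_of G k t \<and> dheight t \<le> n) else \<infinity>)"

definition cut_rep :: "graph \<Rightarrow> nat \<Rightarrow> nat \<Rightarrow> bool" where
  "cut_rep G k m \<longleftrightarrow> (\<exists>Hs R. length Hs = m \<and> (\<forall>H\<in>set Hs. pV H \<noteq> {} \<and> ports_in k H) \<and>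
      disjoint_ops Hs \<and> graph_iso G (tensor_Del R Hs))"

definition Cut :: "graph \<Rightarrow> nat \<Rightarrow> nat" where
  "Cut G k = (GREATEST m. cut_rep G k m)"

definition has_CUT :: "graph set \<Rightarrow> bool" where
  "has_CUT C \<longleftrightarrow> (\<exists>f. \<forall>G\<in>C. \<forall>k. Cut G k \<le> f k)"

datatype mso =
    MEq nat nat
  | MEdge nat nat
  | MMem nat nat
  | MNeg mso
  | MConj mso mso
  | MEx1 nat mso
  | MEx2 nat mso

fun fv1 :: "mso \<Rightarrow> nat set" where
  "fv1 (MEq i j) = {i, j}"
| "fv1 (MEdge i j) = {i, j}"
| "fv1 (MMem i X) = {i}"
| "fv1 (MNeg \<phi>) = fv1 \<phi>"
| "fv1 (MConj \<phi> \<psi>) = fv1 \<phi> \<union> fv1 \<psi>"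
| "fv1 (MEx1 i \<phi>) = fv1 \<phi> - {i}"
| "fv1 (MEx2 X \<phi>) = fv1 \<phi>"

fun fv2 :: "mso \<Rightarrow> nat set" where
  "fv2 (MEq i j) = {}"
| "fv2 (MEdge i j) = {}"
| "fv2 (MMem i X) = {X}"
| "fv2 (MNeg \<phi>) = fv2 \<phi>"
| "fv2 (MConj \<phi> \<psi>) = fv2 \<phi> \<union> fv2 \<psi>"
| "fv2 (MEx1 i \<phi>) = fv2 \<phi>"
| "fv2 (MEx2 X \<phi>) = fv2 \<phi> - {X}"

fun sat :: "graph \<Rightarrow> (nat \<Rightarrow> nat) \<Rightarrow> (nat \<Rightarrow> nat set) \<Rightarrow> mso \<Rightarrow> bool" where
  "sat G \<alpha> \<beta> (MEq i j) = (\<alpha> i = \<alpha> j)"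
| "sat G \<alpha> \<beta> (MEdge i j) = ({\<alpha> i, \<alpha> j} \<in> snd G)"
| "sat G \<alpha> \<beta> (MMem i X) = (\<alpha> i \<in> \<beta> X)"
| "sat G \<alpha> \<beta> (MNeg \<phi>) = (\<not> sat G \<alpha> \<beta> \<phi>)"
| "sat G \<alpha> \<beta> (MConj \<phi> \<psi>) = (sat G \<alpha> \<beta> \<phi> \<and> sat G \<alpha> \<beta> \<psi>)"
| "sat G \<alpha> \<beta> (MEx1 i \<phi>) = (\<exists>a\<in>fst G. sat G (\<alpha>(i := a)) \<beta> \<phi>)"
| "sat G \<alpha> \<beta> (MEx2 X \<phi>) = (\<exists>S. S \<subseteq> fst G \<and> sat G \<alpha> (\<beta>(X := S)) \<phi>)"

text \<open>\<open>\<phi>(x,y;Z_0,\<dots>,Z_{m-1})\<close>: \<open>x\<close> is first-order variable 0, \<open>y\<close> is variable 1,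
\<open>Z_i\<close> is set variable \<open>i\<close>.\<close>
definition MSO_orderable :: "graph set \<Rightarrow> bool" where
  "MSO_orderable C \<longleftrightarrow> (\<exists>\<phi> m. fv1 \<phi> \<subseteq> {0, 1} \<and> fv2 \<phi> \<subseteq> {..<m} \<and>
     (\<forall>G\<in>C. fst G \<noteq> {} \<longrightarrow>
        (\<exists>P :: nat \<Rightarrow> nat set. (\<forall>i<m. P i \<subseteq> fst G) \<and>
           linear_order_on (fst G)
             {(a, b). a \<in> fst G \<and> b \<in> fst G \<and>
                sat G (\<lambda>i. if i = 0 then a else b) P \<phi>})))"

definition finite_up_to_iso :: "graph set \<Rightarrow> bool" where
  "finite_up_to_iso C \<longleftrightarrow> (\<exists>F. finite F \<and> (\<forall>G\<in>C. \<exists>G'\<in>F. graph_iso G G'))"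

end

theory Submission
  imports Defs "HOL-Library.Disjoint_Sets"
begin

abbreviation root_pg :: "(pgraph \<times> (nat \<times> nat) set) dtree \<Rightarrow> pgraph" where
  "root_pg t \<equiv> fst (dlabel t)"

fun subtrees :: "'a dtree \<Rightarrow> 'a dtree set" where
  "subtrees (DNode x ts) = insert (DNode x ts) (\<Union>t\<in>set ts. subtrees t)"

lemma finite_graph_edge_verts: "finite_graph G \<Longrightarrow> {x, y} \<in> snd G \<Longrightarrow> x \<in> fst G \<and> y \<in> fst G"
  unfolding finite_graph_def by (auto simp: doubleton_eq_iff)

lemma disjoint_opsD:
  "disjoint_ops Hs \<Longrightarrow> i < length Hs \<Longrightarrow> j < length Hs \<Longrightarrow> x \<in> pV (Hs!i) \<Longrightarrow> x \<in> pV (Hs!j) \<Longrightarrow> i = j"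
  unfolding disjoint_ops_def by blast

lemma tensor_Del_edge_iff:
  assumes dj: "disjoint_ops Hs" and fg: "\<forall>H\<in>set Hs. finite_graph (Del H)"
    and A: "A \<in> set Hs" "x \<in> pV A" and B: "B \<in> set Hs" "y \<in> pV B"
  shows "{x, y} \<in> snd (tensor_Del R Hs) \<longleftrightarrow>
    (if A = B then {x, y} \<in> pE A else (pl A x, pl B y) \<in> R \<or> (pl B y, pl A x) \<in> R)"
proof -
  obtain i j where i: "i < length Hs" "A = Hs!i" and j: "j < length Hs" "B = Hs!j"
    using A B by (auto simp: in_set_conv_nth)
  note same = disjoint_opsD[OF dj]
  have AB: "A = B \<longleftrightarrow> i = j" using same i j A B by metis
  have inner: "(\<exists>H\<in>set Hs. {x, y} \<in> pE H) \<longleftrightarrow> i = j \<and> {x, y} \<in> pE A"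
  proof
    assume "\<exists>H\<in>set Hs. {x, y} \<in> pE H"
    then obtain l where l: "l < length Hs" "{x, y} \<in> pE (Hs!l)" by (auto simp: in_set_conv_nth)
    then have "x \<in> pV (Hs!l)" "y \<in> pV (Hs!l)"
      using fg finite_graph_edge_verts[of "Del (Hs!l)"] by (auto simp: Del_def)
    then show "i = j \<and> {x, y} \<in> pE A" using same i j A B l by metis
  qed (use A in auto)
  have cross: "(\<exists>x' y' i' j'. {x, y} = {x', y'} \<and> i' < length Hs \<and> j' < length Hs \<and> i' \<noteq> j' \<and>
      x' \<in> pV (Hs!i') \<and> y' \<in> pV (Hs!j') \<and> (pl (Hs!i') x', pl (Hs!j') y') \<in> R)
    \<longleftrightarrow> i \<noteq> j \<and> ((pl A x, pl B y) \<in> R \<or> (pl B y, pl A x) \<in> R)"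
    using same i j A B by (auto simp: doubleton_eq_iff) metis+
  show ?thesis
    using inner cross AB unfolding tensor_Del_def by auto
qed

lemma valid_dec_mono: "valid_dec k t \<Longrightarrow> k \<le> k' \<Longrightarrow> valid_dec k' t"
proof (induction rule: valid_dec.induct)
  case (leaf H R) then show ?case by (force intro!: valid_dec.leaf simp: ports_in_def)
next
  case (node H ts R) then show ?case by (force intro!: valid_dec.node simp: ports_in_def)
qed

lemma valid_dec_leafD: "valid_dec k (DNode (H, R) []) \<Longrightarrow> card (pV H) = 1"
  by (cases rule: valid_dec.cases) auto

lemma valid_dec_nodeD:
  assumes "valid_dec k (DNode (H, R) ts)" and "ts \<noteq> []"
  shows "ports_in k H" and "\<forall>c\<in>set ts. valid_dec k c"
    and "disjoint_ops (map (fst \<circ> dlabel) ts)" and "Del H = tensor_Del R (map (fst \<circ> dlabel) ts)"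
  using assms by (cases rule: valid_dec.cases; auto)+

lemma pV_node:
  "valid_dec k (DNode (H, R) ts) \<Longrightarrow> ts \<noteq> [] \<Longrightarrow> pV H = (\<Union>c\<in>set ts. pV (root_pg c))"
proof -
  assume "valid_dec k (DNode (H, R) ts)" "ts \<noteq> []"
  then have "Del H = tensor_Del R (map (fst \<circ> dlabel) ts)" by (rule valid_dec_nodeD)
  then show ?thesis by (simp add: Del_def tensor_Del_def)
qed

lemma valid_dec_root: "valid_dec k t \<Longrightarrow> ports_in k (root_pg t) \<and> pV (root_pg t) \<noteq> {}"
proof (induction rule: valid_dec.induct)
  case (node H ts R)
  then have "pV H = (\<Union>c\<in>set ts. pV (root_pg c))" by (simp add: Del_def tensor_Del_def)
  with node show ?case by (cases ts) auto
qed auto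

lemma valid_dec_child: "valid_dec k (DNode (H, R) ts) \<Longrightarrow> c \<in> set ts \<Longrightarrow> valid_dec k c"
  using valid_dec_nodeD(2)[of k H R ts] by (cases ts) auto

lemma children_disjoint:
  assumes v: "valid_dec k (DNode (H, R) ts)" and "c \<in> set ts" "c' \<in> set ts" "c \<noteq> c'"
  shows "pV (root_pg c) \<inter> pV (root_pg c') = {}"
proof -
  obtain i j where ij: "i < length ts" "j < length ts" and "c = ts!i" "c' = ts!j"
    using assms(2,3) by (auto simp: in_set_conv_nth)
  moreover from this have "i \<noteq> j" using assms(4) by auto
  moreover have "disjoint_ops (map (fst \<circ> dlabel) ts)"
    using assms(2) by (intro valid_dec_nodeD(3)[OF v]) auto
  ultimately show ?thesis unfolding disjoint_ops_def by auto
qed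

lemma distinct_children: "valid_dec k (DNode (H, R) ts) \<Longrightarrow> distinct ts"
proof (rule ccontr)
  assume v: "valid_dec k (DNode (H, R) ts)" and "\<not> distinct ts"
  then obtain i j where ij: "i < length ts" "j < length ts" "i \<noteq> j" "ts!i = ts!j"
    using distinct_conv_nth by blast
  then have "disjoint_ops (map (fst \<circ> dlabel) ts)" by (intro valid_dec_nodeD(3)[OF v]) auto
  then have "pV (root_pg (ts!i)) \<inter> pV (root_pg (ts!j)) = {}"
    using ij(1-3) unfolding disjoint_ops_def by simp
  then have "pV (root_pg (ts!i)) = {}" by (simp add: ij(4))
  moreover have "valid_dec k (ts!i)" using valid_dec_child[OF v] ij(1) by simp
  ultimately show False using valid_dec_root by blast
qed

lemma node_edge_iff:
  assumes v: "valid_dec k (DNode (H, R) ts)"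
    and c: "c \<in> set ts" "x \<in> pV (root_pg c)" and c': "c' \<in> set ts" "y \<in> pV (root_pg c')"
  shows "{x, y} \<in> pE H \<longleftrightarrow> (if c = c' then {x, y} \<in> pE (root_pg c)
     else (pl (root_pg c) x, pl (root_pg c') y) \<in> R \<or> (pl (root_pg c') y, pl (root_pg c) x) \<in> R)"
proof -
  have ne: "ts \<noteq> []" using c by auto
  have "root_pg c = root_pg c' \<longleftrightarrow> c = c'"
  proof
    assume "root_pg c = root_pg c'"
    then show "c = c'" using children_disjoint[OF v c(1) c'(1)] c(2) by auto
  qed simp
  moreover have "\<forall>G\<in>set (map (fst \<circ> dlabel) ts). finite_graph (Del G)"
    using valid_dec_root[OF valid_dec_child[OF v]] by (simp add: ports_in_def)
  moreover have "pE H = snd (tensor_Del R (map (fst \<circ> dlabel) ts))"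
    using valid_dec_nodeD(4)[OF v ne] unfolding Del_def by (metis snd_conv)
  ultimately show ?thesis
    using tensor_Del_edge_iff[OF valid_dec_nodeD(3)[OF v ne], of "root_pg c" x "root_pg c'" y R] c c'
    by simp
qed

lemma valid_dec_subtree:
  assumes "valid_dec k t" "v \<in> subtrees t"
  shows "valid_dec k v" and "pV (root_pg v) \<subseteq> pV (root_pg t)"
    and "\<forall>x\<in>pV (root_pg v). \<forall>y\<in>pV (root_pg v). {x, y} \<in> pE (root_pg t) \<longleftrightarrow> {x, y} \<in> pE (root_pg v)"
proof -
  have "valid_dec k v \<and> pV (root_pg v) \<subseteq> pV (root_pg t) \<and>
    (\<forall>x\<in>pV (root_pg v). \<forall>y\<in>pV (root_pg v). {x, y} \<in> pE (root_pg t) \<longleftrightarrow> {x, y} \<in> pE (root_pg v))"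
    using assms
  proof (induction arbitrary: v rule: valid_dec.induct)
    case (leaf H R)
    then show ?case by (auto intro: valid_dec.leaf)
  next
    case (node H ts R)
    have t: "valid_dec k (DNode (H, R) ts)" by (rule valid_dec.node) (use node in auto)
    show ?case
    proof (cases "v = DNode (H, R) ts")
      case False
      then obtain c where c: "c \<in> set ts" "v \<in> subtrees c" using node.prems by auto
      then have IH: "valid_dec k v" "pV (root_pg v) \<subseteq> pV (root_pg c)"
        "\<forall>x\<in>pV (root_pg v). \<forall>y\<in>pV (root_pg v). {x, y} \<in> pE (root_pg c) \<longleftrightarrow> {x, y} \<in> pE (root_pg v)"
        using node.IH by blast+
      moreover have "pV (root_pg c) \<subseteq> pV H" using pV_node[OF t node.hyps(2)] c(1) by blast
      moreover have "{x, y} \<in> pE H \<longleftrightarrow> {x, y} \<in> pE (root_pg c)"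
        if "x \<in> pV (root_pg c)" "y \<in> pV (root_pg c)" for x y
        using node_edge_iff[OF t c(1) that(1) c(1) that(2)] by simp
      ultimately show ?thesis by (simp add: subset_iff)
    qed (simp add: t)
  qed
  then show "valid_dec k v" and "pV (root_pg v) \<subseteq> pV (root_pg t)"
    and "\<forall>x\<in>pV (root_pg v). \<forall>y\<in>pV (root_pg v). {x, y} \<in> pE (root_pg t) \<longleftrightarrow> {x, y} \<in> pE (root_pg v)"
    by auto
qed

lemma dheight_child_less: "c \<in> set ts \<Longrightarrow> dheight c < dheight (DNode x ts)"
  by (auto simp: less_Suc_eq_le)

lemma outdeg_le_iff_subtrees: "outdeg_le d t \<longleftrightarrow> (\<forall>v\<in>subtrees t. length (dchildren v) \<le> d)"
proof (induction t)
  case (DNode x ts)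
  show ?case
  proof
    assume "outdeg_le d (DNode x ts)"
    then show "\<forall>v\<in>subtrees (DNode x ts). length (dchildren v) \<le> d"
      using DNode.IH by (cases rule: outdeg_le.cases) auto
  qed (use DNode.IH in \<open>auto intro: outdeg_le.intros\<close>)
qed

lemma length_le_card_disjoint_ops:
  assumes dj: "disjoint_ops Hs" and ne: "\<forall>H\<in>set Hs. pV H \<noteq> {}" and fin: "finite (\<Union>H\<in>set Hs. pV H)"
  shows "length Hs \<le> card (\<Union>H\<in>set Hs. pV H)"
proof -
  define f where "f i = (SOME x. x \<in> pV (Hs!i))" for i
  have f: "f i \<in> pV (Hs!i)" if "i < length Hs" for i
    using ne nth_mem[OF that] unfolding f_def by (metis ex_in_conv someI_ex)
  have "inj_on f {..<length Hs}" using disjoint_opsD[OF dj] f by (intro inj_onI) (metis lessThan_iff)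
  moreover have "f ` {..<length Hs} \<subseteq> (\<Union>H\<in>set Hs. pV H)" using f nth_mem by fastforce
  ultimately show ?thesis using card_inj_on_le[OF _ _ fin] by fastforce
qed

lemma length_children_le_card:
  assumes v: "valid_dec k (DNode (H, R) ts)"
  shows "length ts \<le> card (pV H)"
proof (cases "ts = []")
  case False
  have "pV H = (\<Union>G\<in>set (map (fst \<circ> dlabel) ts). pV G)" using pV_node[OF v False] by simp
  moreover have "finite (pV H)" using valid_dec_root[OF v] by (simp add: ports_in_def finite_graph_def Del_def)
  moreover have "\<forall>G\<in>set (map (fst \<circ> dlabel) ts). pV G \<noteq> {}"
    using valid_dec_root[OF valid_dec_child[OF v]] by auto
  ultimately show ?thesis using length_le_card_disjoint_ops[OF valid_dec_nodeD(3)[OF v False]] by simp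
qed simp

lemma card_node_le:
  assumes v: "valid_dec k (DNode (H, R) ts)" and ne: "ts \<noteq> []"
    and b: "\<forall>c\<in>set ts. card (pV (root_pg c)) \<le> b"
  shows "card (pV H) \<le> length ts * b"
proof -
  have "card (pV H) \<le> (\<Sum>c\<in>set ts. card (pV (root_pg c)))"
    unfolding pV_node[OF v ne] by (rule card_UN_le) simp
  also have "\<dots> \<le> card (set ts) * b"
    using sum_bounded_above[of "set ts" "\<lambda>c. card (pV (root_pg c))" b] b by simp
  also have "\<dots> \<le> length ts * b" by (simp add: card_length)
  finally show ?thesis .
qed

lemma card_le_outdeg_power:
  "valid_dec k t \<Longrightarrow> outdeg_le d t \<Longrightarrow> card (pV (root_pg t)) \<le> max d 1 ^ dheight t"
proof (induction rule: valid_dec.induct)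
  case (node H ts R)
  define D M where "D = max d 1" and "M = Max (dheight ` set ts)"
  have t: "valid_dec k (DNode (H, R) ts)" by (rule valid_dec.node) (use node in auto)
  have len: "length ts \<le> d" and sub: "\<forall>c\<in>set ts. outdeg_le d c"
    using node.prems by (auto elim: outdeg_le.cases)
  have "card (pV (root_pg c)) \<le> D ^ M" if "c \<in> set ts" for c
  proof -
    have "card (pV (root_pg c)) \<le> D ^ dheight c" using node.IH sub that by (simp add: D_def)
    also have "\<dots> \<le> D ^ M" using that by (intro power_increasing) (auto simp: M_def D_def)
    finally show ?thesis .
  qed
  then have "card (pV H) \<le> length ts * D ^ M" using card_node_le[OF t node.hyps(2)] by blast
  also have "\<dots> \<le> D * D ^ M" using len by (intro mult_right_mono) (auto simp: D_def)
  finally show ?case using node.hyps(2) by (simp add: D_def M_def)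
qed simp

definition lab_iso :: "(nat \<Rightarrow> 'a) \<Rightarrow> pgraph \<Rightarrow> pgraph \<Rightarrow> (nat \<Rightarrow> nat) \<Rightarrow> bool" where
  "lab_iso L A B f \<longleftrightarrow> bij_betw f (pV A) (pV B) \<and>
     (\<forall>x\<in>pV A. pl B (f x) = pl A x \<and> L (f x) = L x) \<and>
     (\<forall>x\<in>pV A. \<forall>y\<in>pV A. {x, y} \<in> pE A \<longleftrightarrow> {f x, f y} \<in> pE B)"

text \<open>Equal canonical forms mean isomorphic labelled
  graphs, and there are only finitely many canonical forms of bounded size.\<close>

definition canon :: "(nat \<Rightarrow> 'a) \<Rightarrow> pgraph \<Rightarrow> nat set set \<times> (nat \<times> 'a) list" where
  "canon L A = (let n = card (pV A); g = SOME g. bij_betw g (pV A) {0..<n} in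
     (image g ` pE A, map (\<lambda>i. (pl A (inv_into (pV A) g i), L (inv_into (pV A) g i))) [0..<n]))"

lemma canon_witness:
  assumes "finite (pV A)"
  obtains g where "bij_betw g (pV A) {0..<card (pV A)}"
    and "canon L A = (image g ` pE A,
      map (\<lambda>i. (pl A (inv_into (pV A) g i), L (inv_into (pV A) g i))) [0..<card (pV A)])"
  using someI_ex[OF ex_bij_betw_finite_nat[OF assms]] unfolding canon_def Let_def by blast

lemma image_edge_iff:
  assumes "inj_on g V" "\<forall>e\<in>E. e \<subseteq> V" "x \<in> V" "y \<in> V"
  shows "{g x, g y} \<in> image g ` E \<longleftrightarrow> {x, y} \<in> E"
proof -
  have "image g {x, y} \<in> image g ` E \<longleftrightarrow> {x, y} \<in> E"
    by (rule inj_on_image_mem_iff[OF inj_on_image_Pow[OF assms(1)]]) (use assms(2-4) in auto)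
  then show ?thesis by simp
qed

lemma edges_subset_verts: "finite_graph (Del A) \<Longrightarrow> \<forall>e\<in>pE A. e \<subseteq> pV A"
  unfolding finite_graph_def Del_def by auto

lemma canon_eq_imp_lab_iso:
  assumes A: "finite_graph (Del A)" and B: "finite_graph (Del B)" and eq: "canon L A = canon L B"
  obtains f where "lab_iso L A B f"
proof -
  have "finite (pV A)" "finite (pV B)" using A B by (auto simp: finite_graph_def Del_def)
  obtain gA where gA: "bij_betw gA (pV A) {0..<card (pV A)}"
    and cA: "canon L A = (image gA ` pE A,
      map (\<lambda>i. (pl A (inv_into (pV A) gA i), L (inv_into (pV A) gA i))) [0..<card (pV A)])"
    by (rule canon_witness[OF \<open>finite (pV A)\<close>])
  obtain gB where gB: "bij_betw gB (pV B) {0..<card (pV B)}"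
    and cB: "canon L B = (image gB ` pE B,
      map (\<lambda>i. (pl B (inv_into (pV B) gB i), L (inv_into (pV B) gB i))) [0..<card (pV B)])"
    by (rule canon_witness[OF \<open>finite (pV B)\<close>])
  have "length (snd (canon L A)) = length (snd (canon L B))" using eq by simp
  then have n: "card (pV A) = card (pV B)" using cA cB by simp
  define f where "f = inv_into (pV B) gB \<circ> gA"
  have f: "bij_betw f (pV A) (pV B)"
    unfolding f_def using bij_betw_trans[OF gA bij_betw_inv_into[OF gB[folded n]]] .
  have gBf: "gB (f x) = gA x" if "x \<in> pV A" for x
    using bij_betw_inv_into_right[OF gB] bij_betw_apply[OF gA that] n by (simp add: f_def)
  have lab: "\<forall>i\<in>{0..<card (pV A)}. pl A (inv_into (pV A) gA i) = pl B (inv_into (pV B) gB i)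
      \<and> L (inv_into (pV A) gA i) = L (inv_into (pV B) gB i)"
    using eq cA cB n by simp
  have "pl B (f x) = pl A x \<and> L (f x) = L x" if "x \<in> pV A" for x
    using lab[rule_format, OF bij_betw_apply[OF gA that]] bij_betw_inv_into_left[OF gA that]
    by (simp add: f_def)
  moreover have "{x, y} \<in> pE A \<longleftrightarrow> {f x, f y} \<in> pE B" if "x \<in> pV A" "y \<in> pV A" for x y
  proof -
    have "{x, y} \<in> pE A \<longleftrightarrow> {gA x, gA y} \<in> image gA ` pE A"
      using image_edge_iff[OF bij_betw_imp_inj_on[OF gA] edges_subset_verts[OF A] that] ..
    also have "\<dots> \<longleftrightarrow> {gB (f x), gB (f y)} \<in> image gB ` pE B"
      using eq cA cB gBf that by simp
    also have "\<dots> \<longleftrightarrow> {f x, f y} \<in> pE B"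
      using image_edge_iff[OF bij_betw_imp_inj_on[OF gB] edges_subset_verts[OF B]]
        bij_betw_apply[OF f] that by blast
    finally show ?thesis .
  qed
  ultimately show ?thesis using f that unfolding lab_iso_def by blast
qed

definition canon_space :: "nat \<Rightarrow> nat \<Rightarrow> 'a set \<Rightarrow> (nat set set \<times> (nat \<times> 'a) list) set" where
  "canon_space b K \<Lambda> = Pow (Pow {0..<b}) \<times> {xs. set xs \<subseteq> {..<K} \<times> \<Lambda> \<and> length xs \<le> b}"

lemma finite_canon_space: "finite \<Lambda> \<Longrightarrow> finite (canon_space b K \<Lambda>)"
  unfolding canon_space_def by (intro finite_cartesian_product finite_lists_length_le) auto

lemma canon_in_canon_space:
  assumes A: "finite_graph (Del A)" and "card (pV A) \<le> b" and "\<forall>x\<in>pV A. pl A x < K \<and> L x \<in> \<Lambda>"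
  shows "canon L A \<in> canon_space b K \<Lambda>"
proof -
  have "finite (pV A)" using A by (simp add: finite_graph_def Del_def)
  then obtain g where g: "bij_betw g (pV A) {0..<card (pV A)}"
    and c: "canon L A = (image g ` pE A,
      map (\<lambda>i. (pl A (inv_into (pV A) g i), L (inv_into (pV A) g i))) [0..<card (pV A)])"
    by (rule canon_witness)
  have "inv_into (pV A) g i \<in> pV A" if "i < card (pV A)" for i
    using bij_betw_apply[OF bij_betw_inv_into[OF g]] that by simp
  moreover have "g ` e \<subseteq> {0..<b}" if "e \<in> pE A" for e
    using bij_betw_apply[OF g] edges_subset_verts[OF A] that assms(2) by fastforce
  ultimately show ?thesis using assms(2,3) unfolding c canon_space_def by auto
qed

definition bounded_size :: "graph set \<Rightarrow> bool" where
  "bounded_size C \<longleftrightarrow> (\<exists>N. \<forall>G\<in>C. card (fst G) \<le> N)"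

definition pg_of :: "graph \<Rightarrow> pgraph" where
  "pg_of G = \<lparr>pV = fst G, pE = snd G, pl = \<lambda>_. 0\<rparr>"

lemma lab_iso_pg_of_imp_graph_iso: "lab_iso L (pg_of G) (pg_of G') f \<Longrightarrow> graph_iso G G'"
  unfolding lab_iso_def graph_iso_def pg_of_def by auto

lemma graph_iso_card_eq: "graph_iso G G' \<Longrightarrow> card (fst G) = card (fst G')"
  unfolding graph_iso_def using bij_betw_same_card by blast

lemma finite_up_to_iso_iff_bounded_size:
  assumes fin: "\<forall>G\<in>C. finite_graph G"
  shows "finite_up_to_iso C \<longleftrightarrow> bounded_size C"
proof
  assume "finite_up_to_iso C"
  then obtain F where F: "finite F" "\<forall>G\<in>C. \<exists>G'\<in>F. graph_iso G G'"
    by (auto simp: finite_up_to_iso_def)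
  have "card (fst G) \<le> Max ((card \<circ> fst) ` F)" if G: "G \<in> C" for G
  proof -
    obtain G' where "G' \<in> F" "graph_iso G G'" using F(2) G by blast
    then show ?thesis using F(1) graph_iso_card_eq by simp
  qed
  then show "bounded_size C" unfolding bounded_size_def by blast
next
  assume "bounded_size C"
  then obtain N where N: "\<forall>G\<in>C. card (fst G) \<le> N" unfolding bounded_size_def by blast
  define cf where "cf G = canon (\<lambda>_. ()) (pg_of G)" for G
  define rep where "rep z = (SOME G. G \<in> C \<and> cf G = z)" for z
  have fg: "finite_graph (Del (pg_of G))" if "G \<in> C" for G
    using fin that by (simp add: Del_def pg_of_def)
  have "cf G \<in> canon_space N 1 {()}" if G: "G \<in> C" for G
    unfolding cf_def using G N by (intro canon_in_canon_space[OF fg[OF G]]) (auto simp: pg_of_def)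
  then have "cf ` C \<subseteq> canon_space N 1 {()}" by blast
  then have "finite (cf ` C)" using finite_canon_space[of "{()}"] by (rule finite_subset) simp
  then have "finite (rep ` cf ` C)" by simp
  moreover have "\<exists>G'\<in>rep ` cf ` C. graph_iso G G'" if G: "G \<in> C" for G
  proof -
    have rep: "rep (cf G) \<in> C" "cf G = cf (rep (cf G))"
      unfolding rep_def using someI[of "\<lambda>G'. G' \<in> C \<and> cf G' = cf G" G] G by auto
    obtain f where "lab_iso (\<lambda>_. ()) (pg_of G) (pg_of (rep (cf G))) f"
      by (rule canon_eq_imp_lab_iso[OF fg[OF G] fg[OF rep(1)]]) (use rep(2) in \<open>simp add: cf_def\<close>)
    then show ?thesis using G by (blast intro: lab_iso_pg_of_imp_graph_iso)
  qed
  ultimately show "finite_up_to_iso C" unfolding finite_up_to_iso_def by blast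
qed

lemma sat_cong_set_vars: "\<forall>X\<in>fv2 \<phi>. \<beta> X = \<beta>' X \<Longrightarrow> sat G \<alpha> \<beta> \<phi> = sat G \<alpha> \<beta>' \<phi>"
proof (induction \<phi> arbitrary: \<alpha> \<beta> \<beta>')
  case (MEx2 X \<psi>)
  then have "sat G \<alpha> (\<beta>(X := S)) \<psi> = sat G \<alpha> (\<beta>'(X := S)) \<psi>" for S by auto
  then show ?case by simp
next
  case (MConj \<phi>1 \<phi>2)
  then have "sat G \<alpha> \<beta> \<phi>1 = sat G \<alpha> \<beta>' \<phi>1" "sat G \<alpha> \<beta> \<phi>2 = sat G \<alpha> \<beta>' \<phi>2" by auto
  then show ?case by simp
qed auto

lemma sat_automorphism:
  assumes inj: "inj \<sigma>" and V: "\<sigma> ` fst G = fst G"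
    and E: "\<forall>x y. {x, y} \<in> snd G \<longleftrightarrow> {\<sigma> x, \<sigma> y} \<in> snd G"
  shows "sat G \<alpha> \<beta> \<phi> = sat G (\<sigma> \<circ> \<alpha>) (\<lambda>X. \<sigma> ` \<beta> X) \<phi>"
proof (induction \<phi> arbitrary: \<alpha> \<beta>)
  case (MEx1 i \<psi>)
  have "sat G (\<alpha>(i := a)) \<beta> \<psi> = sat G ((\<sigma> \<circ> \<alpha>)(i := \<sigma> a)) (\<lambda>X. \<sigma> ` \<beta> X) \<psi>" for a
    using MEx1.IH[of "\<alpha>(i := a)" \<beta>] by (simp only: fun_upd_comp)
  then have "sat G \<alpha> \<beta> (MEx1 i \<psi>) \<longleftrightarrow> (\<exists>a\<in>fst G. sat G ((\<sigma> \<circ> \<alpha>)(i := \<sigma> a)) (\<lambda>X. \<sigma> ` \<beta> X) \<psi>)"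
    by simp
  also have "\<dots> \<longleftrightarrow> (\<exists>b\<in>\<sigma> ` fst G. sat G ((\<sigma> \<circ> \<alpha>)(i := b)) (\<lambda>X. \<sigma> ` \<beta> X) \<psi>)" by simp
  finally show ?case using V by (simp add: comp_def)
next
  case (MEx2 X \<psi>)
  have "(\<lambda>Y. \<sigma> ` (\<beta>(X := S)) Y) = (\<lambda>Y. \<sigma> ` \<beta> Y)(X := \<sigma> ` S)" for S by (rule ext) simp
  then have "sat G \<alpha> (\<beta>(X := S)) \<psi> = sat G (\<sigma> \<circ> \<alpha>) ((\<lambda>Y. \<sigma> ` \<beta> Y)(X := \<sigma> ` S)) \<psi>" for S
    using MEx2.IH[of \<alpha> "\<beta>(X := S)"] by (simp add: comp_def fun_upd_def)
  then have "sat G \<alpha> \<beta> (MEx2 X \<psi>) \<longleftrightarrow>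
      (\<exists>S\<subseteq>fst G. sat G (\<sigma> \<circ> \<alpha>) ((\<lambda>Y. \<sigma> ` \<beta> Y)(X := \<sigma> ` S)) \<psi>)"
    by simp
  also have "\<dots> \<longleftrightarrow> (\<exists>S'\<subseteq>\<sigma> ` fst G. sat G (\<sigma> \<circ> \<alpha>) ((\<lambda>Y. \<sigma> ` \<beta> Y)(X := S')) \<psi>)"
    by (auto simp: subset_image_iff)
  finally show ?case using V by (simp add: comp_def)
qed (use inj E in \<open>auto simp: inj_eq inj_image_mem_iff\<close>)

lemma definable_order_rigid:
  assumes lin: "linear_order_on (fst G) {(a, b). a \<in> fst G \<and> b \<in> fst G \<and> sat G (\<lambda>i. if i = 0 then a else b) P \<phi>}"
    and inv: "\<forall>x. \<sigma> (\<sigma> x) = x" and V: "\<sigma> ` fst G = fst G"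
    and E: "\<forall>x y. {x, y} \<in> snd G \<longleftrightarrow> {\<sigma> x, \<sigma> y} \<in> snd G"
    and P: "\<forall>X\<in>fv2 \<phi>. \<sigma> ` P X = P X" and a: "a \<in> fst G"
  shows "\<sigma> a = a"
proof (rule ccontr)
  assume ne: "\<sigma> a \<noteq> a"
  have b: "\<sigma> a \<in> fst G" using V a by auto
  have inj: "inj \<sigma>" using inv by (metis injI)
  have "sat G (\<lambda>i. if i = 0 then x else y) P \<phi> \<longleftrightarrow> sat G (\<lambda>i. if i = 0 then \<sigma> x else \<sigma> y) P \<phi>" for x y
  proof -
    have "sat G (\<lambda>i. if i = 0 then x else y) P \<phi> =
        sat G (\<sigma> \<circ> (\<lambda>i. if i = 0 then x else y)) (\<lambda>X. \<sigma> ` P X) \<phi>"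
      by (rule sat_automorphism[OF inj V E])
    also have "\<dots> = sat G (\<sigma> \<circ> (\<lambda>i. if i = 0 then x else y)) P \<phi>"
      by (rule sat_cong_set_vars) (use P in auto)
    finally show ?thesis by (simp add: comp_def if_distrib)
  qed
  from this[of a "\<sigma> a"] have swap:
    "sat G (\<lambda>i. if i = 0 then a else \<sigma> a) P \<phi> \<longleftrightarrow> sat G (\<lambda>i. if i = 0 then \<sigma> a else a) P \<phi>"
    by (simp only: inv[rule_format])
  define R where "R = {(a, b). a \<in> fst G \<and> b \<in> fst G \<and> sat G (\<lambda>i. if i = 0 then a else b) P \<phi>}"
  have "total_on (fst G) R" "antisym R" using lin unfolding R_def linear_order_on_def partial_order_on_def by auto
  then have "(a, \<sigma> a) \<in> R \<or> (\<sigma> a, a) \<in> R" "(a, \<sigma> a) \<in> R \<Longrightarrow> (\<sigma> a, a) \<in> R \<Longrightarrow> False"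
    using a b ne unfolding total_on_def antisym_def by blast+
  moreover have "(a, \<sigma> a) \<in> R \<longleftrightarrow> (\<sigma> a, a) \<in> R" using swap a b by (simp add: R_def)
  ultimately show False by blast
qed

fun mdisj :: "mso list \<Rightarrow> mso" where
  "mdisj [] = MNeg (MEq 0 0)"
| "mdisj (\<phi> # \<phi>s) = MNeg (MConj (MNeg \<phi>) (MNeg (mdisj \<phi>s)))"

lemma sat_mdisj: "sat G \<alpha> \<beta> (mdisj \<phi>s) \<longleftrightarrow> (\<exists>\<phi>\<in>set \<phi>s. sat G \<alpha> \<beta> \<phi>)"
  by (induction \<phi>s) auto

lemma fv1_mdisj_subset: "0 \<in> S \<Longrightarrow> \<forall>\<phi>\<in>set \<phi>s. fv1 \<phi> \<subseteq> S \<Longrightarrow> fv1 (mdisj \<phi>s) \<subseteq> S"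
  by (induction \<phi>s) auto

lemma fv2_mdisj: "fv2 (mdisj \<phi>s) = (\<Union>\<phi>\<in>set \<phi>s. fv2 \<phi>)"
  by (induction \<phi>s) auto

text \<open>Interpreting the set variables as singletons of the first \<open>N\<close> vertices in some
  enumeration, this formula defines the enumeration order.\<close>

definition order_formula :: "nat \<Rightarrow> mso" where
  "order_formula N =
     mdisj (MEq 0 1 # map (\<lambda>j. MConj (MMem 1 j) (mdisj (map (\<lambda>i. MMem 0 i) [0..<j]))) [0..<N])"

lemma sat_order_formula:
  "sat G \<alpha> \<beta> (order_formula N) \<longleftrightarrow> \<alpha> 0 = \<alpha> 1 \<or> (\<exists>j<N. \<exists>i<j. \<alpha> 0 \<in> \<beta> i \<and> \<alpha> 1 \<in> \<beta> j)"
  unfolding order_formula_def by (auto simp: sat_mdisj)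

lemma fv_order_formula: "fv1 (order_formula N) \<subseteq> {0, 1}" "fv2 (order_formula N) \<subseteq> {..<N}"
proof -
  have "fv1 (mdisj (map (\<lambda>i. MMem 0 i) [0..<j])) \<subseteq> {0, 1}" for j
    by (rule fv1_mdisj_subset) auto
  then show "fv1 (order_formula N) \<subseteq> {0, 1}"
    unfolding order_formula_def by (intro fv1_mdisj_subset) auto
qed (auto simp: order_formula_def fv2_mdisj)

lemma linear_order_on_inj_nat:
  "inj_on (g :: 'a \<Rightarrow> nat) V \<Longrightarrow> linear_order_on V {(a, b). a \<in> V \<and> b \<in> V \<and> g a \<le> g b}"
  unfolding linear_order_on_def partial_order_on_def preorder_on_def refl_on_def trans_def
    antisym_def total_on_def
  by (auto dest: inj_onD)

lemma bounded_size_imp_MSO_orderable: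
  assumes fin: "\<forall>G\<in>C. finite_graph G" and "bounded_size C"
  shows "MSO_orderable C"
proof -
  obtain N where N: "\<forall>G\<in>C. card (fst G) \<le> N" using assms(2) unfolding bounded_size_def by blast
  have "\<exists>P. (\<forall>i<N. P i \<subseteq> fst G) \<and> linear_order_on (fst G)
      {(a, b). a \<in> fst G \<and> b \<in> fst G \<and> sat G (\<lambda>i. if i = 0 then a else b) P (order_formula N)}"
    if G: "G \<in> C" for G
  proof -
    have "finite (fst G)" using fin G by (simp add: finite_graph_def)
    then obtain g where g: "bij_betw g (fst G) {0..<card (fst G)}" using ex_bij_betw_finite_nat by blast
    define P where "P i = {x \<in> fst G. g x = i}" for i
    have "sat G (\<lambda>i. if i = 0 then a else b) P (order_formula N) \<longleftrightarrow> g a \<le> g b"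
      if ab: "a \<in> fst G" "b \<in> fst G" for a b
    proof -
      have "g b < N" using bij_betw_apply[OF g ab(2)] N G by auto
      then have "sat G (\<lambda>i. if i = 0 then a else b) P (order_formula N) \<longleftrightarrow> a = b \<or> g a < g b"
        using ab by (auto simp: sat_order_formula P_def)
      also have "\<dots> \<longleftrightarrow> g a \<le> g b" using inj_on_eq_iff[OF bij_betw_imp_inj_on[OF g] ab] by auto
      finally show ?thesis .
    qed
    then have "{(a, b). a \<in> fst G \<and> b \<in> fst G \<and> sat G (\<lambda>i. if i = 0 then a else b) P (order_formula N)}
        = {(a, b). a \<in> fst G \<and> b \<in> fst G \<and> g a \<le> g b}" by auto
    then have "linear_order_on (fst G)
        {(a, b). a \<in> fst G \<and> b \<in> fst G \<and> sat G (\<lambda>i. if i = 0 then a else b) P (order_formula N)}"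
      using linear_order_on_inj_nat[OF bij_betw_imp_inj_on[OF g]] by simp
    moreover have "\<forall>i<N. P i \<subseteq> fst G" by (auto simp: P_def)
    ultimately show ?thesis by blast
  qed
  then show ?thesis unfolding MSO_orderable_def
    using fv_order_formula by (intro exI[of _ "order_formula N"] exI[of _ N] conjI ballI impI) auto
qed

lemma lab_iso_cong: "lab_iso L A B f \<Longrightarrow> \<forall>x\<in>pV A. g x = f x \<Longrightarrow> lab_iso L A B g"
  unfolding lab_iso_def using bij_betw_cong[of "pV A" g f "pV B"] by simp

lemma lab_iso_identity: "\<forall>x\<in>pV A. \<sigma> x = x \<Longrightarrow> lab_iso L A A \<sigma>"
  by (rule lab_iso_cong[of L A A id]) (auto simp: lab_iso_def)

lemma lab_iso_inv: "lab_iso L A B f \<Longrightarrow> lab_iso L B A (inv_into (pV A) f)"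
proof -
  assume f: "lab_iso L A B f"
  then have bij: "bij_betw f (pV A) (pV B)" by (simp add: lab_iso_def)
  let ?g = "inv_into (pV A) f"
  have g: "?g y \<in> pV A" "f (?g y) = y" if "y \<in> pV B" for y
    using bij_betw_apply[OF bij_betw_inv_into[OF bij] that] bij_betw_inv_into_right[OF bij that] by auto
  have "pl A (?g y) = pl B y \<and> L (?g y) = L y" if "y \<in> pV B" for y
    using f g[OF that] unfolding lab_iso_def by metis
  moreover have "{y, z} \<in> pE B \<longleftrightarrow> {?g y, ?g z} \<in> pE A" if "y \<in> pV B" "z \<in> pV B" for y z
    using f g[OF that(1)] g[OF that(2)] unfolding lab_iso_def by metis
  ultimately show ?thesis using bij_betw_inv_into[OF bij] unfolding lab_iso_def by blast
qed

definition lab_involution :: "(nat \<Rightarrow> 'a) \<Rightarrow> pgraph \<Rightarrow> (nat \<Rightarrow> nat) \<Rightarrow> bool" where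
  "lab_involution L A \<sigma> \<longleftrightarrow> (\<forall>x. \<sigma> (\<sigma> x) = x) \<and> (\<forall>x. x \<notin> pV A \<longrightarrow> \<sigma> x = x) \<and> lab_iso L A A \<sigma>"

lemma swap_lab_iso:
  assumes f: "lab_iso L A B f" and dj: "pV A \<inter> pV B = {}"
  defines "\<sigma> \<equiv> \<lambda>x. if x \<in> pV A then f x else if x \<in> pV B then inv_into (pV A) f x else x"
  shows "\<forall>x. \<sigma> (\<sigma> x) = x" and "\<forall>x. x \<notin> pV A \<union> pV B \<longrightarrow> \<sigma> x = x"
    and "lab_iso L A B \<sigma>" and "lab_iso L B A \<sigma>"
proof -
  have bij: "bij_betw f (pV A) (pV B)" using f by (simp add: lab_iso_def)
  let ?g = "inv_into (pV A) f"
  have g: "?g y \<in> pV A" "f (?g y) = y" if "y \<in> pV B" for y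
    using bij_betw_apply[OF bij_betw_inv_into[OF bij] that] bij_betw_inv_into_right[OF bij that] by auto
  have fA: "f x \<in> pV B" "?g (f x) = x" if "x \<in> pV A" for x
    using bij_betw_apply[OF bij that] bij_betw_inv_into_left[OF bij that] by auto
  show "\<forall>x. \<sigma> (\<sigma> x) = x" using g fA dj unfolding \<sigma>_def by auto
  show "\<forall>x. x \<notin> pV A \<union> pV B \<longrightarrow> \<sigma> x = x" unfolding \<sigma>_def by simp
  show "lab_iso L A B \<sigma>" using f by (rule lab_iso_cong) (simp add: \<sigma>_def)
  show "lab_iso L B A \<sigma>" using lab_iso_inv[OF f] by (rule lab_iso_cong) (use dj in \<open>auto simp: \<sigma>_def\<close>)
qed

lemma node_edges_preserved:
  assumes v: "valid_dec k (DNode (H, R) ts)" and ne: "ts \<noteq> []"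
    and \<pi>: "\<forall>c\<in>set ts. \<pi> c \<in> set ts" "inj_on \<pi> (set ts)"
    and iso: "\<forall>c\<in>set ts. lab_iso L (root_pg c) (root_pg (\<pi> c)) \<sigma>"
    and x: "x \<in> pV H" and y: "y \<in> pV H"
  shows "{x, y} \<in> pE H \<longleftrightarrow> {\<sigma> x, \<sigma> y} \<in> pE H"
proof -
  obtain c d where c: "c \<in> set ts" "x \<in> pV (root_pg c)" and d: "d \<in> set ts" "y \<in> pV (root_pg d)"
    using x y pV_node[OF v ne] by auto
  have \<sigma>c: "\<sigma> x \<in> pV (root_pg (\<pi> c))" "pl (root_pg (\<pi> c)) (\<sigma> x) = pl (root_pg c) x"
    and \<sigma>d: "\<sigma> y \<in> pV (root_pg (\<pi> d))" "pl (root_pg (\<pi> d)) (\<sigma> y) = pl (root_pg d) y"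
    using iso c d unfolding lab_iso_def by (auto dest: bij_betw_apply)
  have "\<pi> c = \<pi> d \<longleftrightarrow> c = d" using \<pi>(2) c d by (auto dest: inj_onD)
  moreover have "{x, y} \<in> pE (root_pg c) \<longleftrightarrow> {\<sigma> x, \<sigma> y} \<in> pE (root_pg (\<pi> c))" if "c = d"
    using iso c d that unfolding lab_iso_def by blast
  ultimately show ?thesis
    using node_edge_iff[OF v c d] node_edge_iff[OF v \<pi>(1)[rule_format, OF c(1)] \<sigma>c(1) \<pi>(1)[rule_format, OF d(1)] \<sigma>d(1)]
      \<sigma>c(2) \<sigma>d(2) by auto
qed

lemma lab_involution_node:
  assumes v: "valid_dec k (DNode (H, R) ts)" and ne: "ts \<noteq> []"
    and \<pi>: "\<forall>c\<in>set ts. \<pi> c \<in> set ts" "inj_on \<pi> (set ts)"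
    and iso: "\<forall>c\<in>set ts. lab_iso (\<lambda>x. pl H x # L x) (root_pg c) (root_pg (\<pi> c)) \<sigma>"
    and inv: "\<forall>x. \<sigma> (\<sigma> x) = x" and out: "\<forall>x. x \<notin> pV H \<longrightarrow> \<sigma> x = x"
  shows "lab_involution L H \<sigma>"
proof -
  have lab: "\<sigma> x \<in> pV H \<and> pl H (\<sigma> x) = pl H x \<and> L (\<sigma> x) = L x" if x: "x \<in> pV H" for x
  proof -
    obtain c where c: "c \<in> set ts" "x \<in> pV (root_pg c)" using x pV_node[OF v ne] by blast
    then have isoc: "lab_iso (\<lambda>x. pl H x # L x) (root_pg c) (root_pg (\<pi> c)) \<sigma>" using iso by blast
    then have "\<sigma> x \<in> pV (root_pg (\<pi> c))" unfolding lab_iso_def using c(2) by (blast dest: bij_betw_apply)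
    moreover have "pl H (\<sigma> x) # L (\<sigma> x) = pl H x # L x" using isoc c(2) unfolding lab_iso_def by blast
    moreover have "\<pi> c \<in> set ts" using \<pi>(1) c(1) by blast
    ultimately show ?thesis using pV_node[OF v ne] by blast
  qed
  then have "bij_betw \<sigma> (pV H) (pV H)"
    using inv by (intro bij_betw_byWitness[where f' = \<sigma>]) blast+
  moreover have "\<forall>x\<in>pV H. \<forall>y\<in>pV H. {x, y} \<in> pE H \<longleftrightarrow> {\<sigma> x, \<sigma> y} \<in> pE H"
    using node_edges_preserved[OF v ne \<pi> iso] by blast
  ultimately show ?thesis using lab inv out unfolding lab_involution_def lab_iso_def by blast
qed

lemma lab_involution_from_child:
  assumes v: "valid_dec k (DNode (H, R) ts)" and c: "c \<in> set ts"
    and \<sigma>: "lab_involution (\<lambda>x. pl H x # L x) (root_pg c) \<sigma>"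
  shows "lab_involution L H \<sigma>"
proof -
  have ne: "ts \<noteq> []" using c by auto
  have inv: "\<forall>x. \<sigma> (\<sigma> x) = x" and out: "\<forall>x. x \<notin> pV (root_pg c) \<longrightarrow> \<sigma> x = x"
    and iso: "lab_iso (\<lambda>x. pl H x # L x) (root_pg c) (root_pg c) \<sigma>"
    using \<sigma> unfolding lab_involution_def by auto
  have "lab_iso (\<lambda>x. pl H x # L x) (root_pg d) (root_pg d) \<sigma>" if "d \<in> set ts" "d \<noteq> c" for d
    using out children_disjoint[OF v that(1) c that(2)] by (intro lab_iso_identity) blast
  then have "\<forall>d\<in>set ts. lab_iso (\<lambda>x. pl H x # L x) (root_pg d) (root_pg (id d)) \<sigma>"
    using iso by auto
  moreover have "\<forall>x. x \<notin> pV H \<longrightarrow> \<sigma> x = x" using out pV_node[OF v ne] c by auto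
  ultimately show ?thesis using lab_involution_node[OF v ne, of id] inv by simp
qed

lemma lab_involution_swap_children:
  assumes v: "valid_dec k (DNode (H, R) ts)" and c: "c \<in> set ts" "c' \<in> set ts" "c \<noteq> c'"
    and f: "lab_iso (\<lambda>x. pl H x # L x) (root_pg c) (root_pg c') f"
  obtains \<sigma> where "lab_involution L H \<sigma>" and "\<exists>a\<in>pV H. \<sigma> a \<noteq> a"
proof -
  have ne: "ts \<noteq> []" using c by auto
  have dj: "pV (root_pg c) \<inter> pV (root_pg c') = {}" by (rule children_disjoint[OF v c])
  define \<sigma> where "\<sigma> x = (if x \<in> pV (root_pg c) then f x
    else if x \<in> pV (root_pg c') then inv_into (pV (root_pg c)) f x else x)" for x
  note sw = swap_lab_iso[OF f dj, folded \<sigma>_def]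
  define \<pi> where "\<pi> d = (if d = c then c' else if d = c' then c else d)" for d
  have "lab_iso (\<lambda>x. pl H x # L x) (root_pg d) (root_pg d) \<sigma>" if "d \<in> set ts" "d \<noteq> c" "d \<noteq> c'" for d
    using sw(2) children_disjoint[OF v that(1) c(1) that(2)] children_disjoint[OF v that(1) c(2) that(3)]
    by (intro lab_iso_identity) blast
  then have "\<forall>d\<in>set ts. lab_iso (\<lambda>x. pl H x # L x) (root_pg d) (root_pg (\<pi> d)) \<sigma>"
    using sw(3,4) by (auto simp: \<pi>_def)
  moreover have "\<forall>x. x \<notin> pV H \<longrightarrow> \<sigma> x = x" using sw(2) pV_node[OF v ne] c by auto
  moreover have "\<forall>d\<in>set ts. \<pi> d \<in> set ts" "inj_on \<pi> (set ts)" using c by (auto simp: \<pi>_def inj_on_def)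
  ultimately have "lab_involution L H \<sigma>" using lab_involution_node[OF v ne _ _ _ sw(1)] by blast
  moreover obtain a where a: "a \<in> pV (root_pg c)"
    using valid_dec_root[OF valid_dec_child[OF v c(1)]] by auto
  then have "\<sigma> a \<in> pV (root_pg c')" using sw(3) unfolding lab_iso_def by (auto dest: bij_betw_apply)
  then have "\<sigma> a \<noteq> a" using a dj by auto
  moreover have "a \<in> pV H" using a pV_node[OF v ne] c(1) by blast
  ultimately show ?thesis using that by blast
qed

lemma children_with_equal_canon:
  assumes v: "valid_dec k (DNode (H, R) ts)" and fin: "finite \<Lambda>" and "k \<le> K"
    and small: "\<forall>c\<in>set ts. card (pV (root_pg c)) \<le> b"
    and lab: "\<forall>x\<in>pV H. L x \<in> \<Lambda>" and many: "card (canon_space b K \<Lambda>) < length ts"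
  obtains c c' where "c \<in> set ts" "c' \<in> set ts" "c \<noteq> c'" "canon L (root_pg c) = canon L (root_pg c')"
proof (rule ccontr)
  assume "\<not> thesis"
  then have "inj_on (\<lambda>c. canon L (root_pg c)) (set ts)" using that by (auto simp: inj_on_def)
  moreover have "canon L (root_pg c) \<in> canon_space b K \<Lambda>" if c: "c \<in> set ts" for c
  proof (rule canon_in_canon_space)
    have "ports_in k (root_pg c)" using valid_dec_root[OF valid_dec_child[OF v c]] by blast
    moreover have "ts \<noteq> []" using c by auto
    ultimately show "finite_graph (Del (root_pg c))" and "\<forall>x\<in>pV (root_pg c). pl (root_pg c) x < K \<and> L x \<in> \<Lambda>"
      using lab pV_node[OF v] c \<open>k \<le> K\<close> by (auto simp: ports_in_def)
    show "card (pV (root_pg c)) \<le> b" using small c by blast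
  qed
  ultimately have "card (set ts) \<le> card (canon_space b K \<Lambda>)"
    using finite_canon_space[OF fin] by (intro card_inj_on_le) auto
  then show False using many distinct_card[OF distinct_children[OF v]] by simp
qed

lemma large_dec_has_lab_involution:
  assumes kK: "k \<le> K"
  shows "\<exists>B. \<forall>t L. valid_dec k t \<longrightarrow> dheight t \<le> h \<longrightarrow>
    (\<forall>x\<in>pV (root_pg t). set (L x) \<subseteq> {..<K} \<and> length (L x) = l) \<longrightarrow> B < card (pV (root_pg t)) \<longrightarrow>
    (\<exists>\<sigma>. lab_involution L (root_pg t) \<sigma> \<and> (\<exists>a\<in>pV (root_pg t). \<sigma> a \<noteq> a))"
proof (induction h arbitrary: l)
  case 0
  have "card (pV (root_pg t)) \<le> 1" if "valid_dec k t" "dheight t \<le> 0" for t :: "(pgraph \<times> (nat \<times> nat) set) dtree"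
    using that by (cases t) (auto simp: valid_dec_leafD split: if_splits)
  then show ?case by (metis not_le)
next
  case (Suc h)
  define \<Lambda> where "\<Lambda> = {xs. set xs \<subseteq> {..<K} \<and> length xs = Suc l}"
  obtain b where b: "\<forall>t L. valid_dec k t \<longrightarrow> dheight t \<le> h \<longrightarrow> (\<forall>x\<in>pV (root_pg t). L x \<in> \<Lambda>) \<longrightarrow>
    b < card (pV (root_pg t)) \<longrightarrow> (\<exists>\<sigma>. lab_involution L (root_pg t) \<sigma> \<and> (\<exists>a\<in>pV (root_pg t). \<sigma> a \<noteq> a))"
    using Suc.IH[of "Suc l"] unfolding \<Lambda>_def by auto
  define N where "N = card (canon_space b K \<Lambda>)"
  have "\<exists>\<sigma>. lab_involution L H \<sigma> \<and> (\<exists>a\<in>pV H. \<sigma> a \<noteq> a)"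
    if v: "valid_dec k (DNode (H, R) ts)" and ht: "dheight (DNode (H, R) ts) \<le> Suc h"
      and L: "\<forall>x\<in>pV H. set (L x) \<subseteq> {..<K} \<and> length (L x) = l" and big: "N * b + 1 < card (pV H)"
    for H R ts L
  proof -
    have ne: "ts \<noteq> []" using v big valid_dec_leafD by fastforce
    have L': "\<forall>x\<in>pV H. pl H x # L x \<in> \<Lambda>"
      using L kK valid_dec_root[OF v] by (auto simp: \<Lambda>_def ports_in_def)
    show ?thesis
    proof (cases "\<exists>c\<in>set ts. b < card (pV (root_pg c))")
      case True
      then obtain c where c: "c \<in> set ts" "b < card (pV (root_pg c))" by blast
      have hc: "dheight c \<le> h" using dheight_child_less[OF c(1)] ht by simp
      have sub: "pV (root_pg c) \<subseteq> pV H" using pV_node[OF v ne] c(1) by blast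
      then have "\<forall>x\<in>pV (root_pg c). pl H x # L x \<in> \<Lambda>" using L' by blast
      then obtain \<sigma> a where "lab_involution (\<lambda>x. pl H x # L x) (root_pg c) \<sigma>"
        "a \<in> pV (root_pg c)" "\<sigma> a \<noteq> a"
        using b[rule_format, of c "\<lambda>x. pl H x # L x", OF valid_dec_child[OF v c(1)] hc _ c(2)] by blast
      then show ?thesis using lab_involution_from_child[OF v c(1)] sub by blast
    next
      case False
      then have small: "\<forall>c\<in>set ts. card (pV (root_pg c)) \<le> b" by (simp add: not_less)
      have "N < length ts"
      proof (rule ccontr)
        assume "\<not> N < length ts"
        then have "length ts * b \<le> N * b" by (intro mult_le_mono1) simp
        then show False using card_node_le[OF v ne small] big by linarith
      qed
      then obtain c c' where c: "c \<in> set ts" "c' \<in> set ts" "c \<noteq> c'"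
        and eq: "canon (\<lambda>x. pl H x # L x) (root_pg c) = canon (\<lambda>x. pl H x # L x) (root_pg c')"
        using children_with_equal_canon[OF v _ kK small L'] finite_lists_length_eq[of "{..<K}"]
        unfolding N_def \<Lambda>_def by blast
      have "finite_graph (Del (root_pg d))" if "d \<in> set ts" for d
        using valid_dec_root[OF valid_dec_child[OF v that]] by (simp add: ports_in_def)
      then obtain f where "lab_iso (\<lambda>x. pl H x # L x) (root_pg c) (root_pg c') f"
        using canon_eq_imp_lab_iso[OF _ _ eq] c by blast
      then show ?thesis using lab_involution_swap_children[OF v c] by blast
    qed
  qed
  then show ?case by (metis dtree.exhaust surj_pair fst_conv dlabel.simps)
qed

lemma involution_image_eq: "\<forall>x. \<sigma> (\<sigma> x) = x \<Longrightarrow> \<forall>x\<in>S. \<sigma> x \<in> S \<Longrightarrow> \<sigma> ` S = S"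
  by (metis image_subset_iff subsetI subset_antisym imageI)

lemma lab_involution_automorphism:
  assumes \<sigma>: "lab_involution L A \<sigma>" and fg: "finite_graph (Del A)"
  shows "\<sigma> ` pV A = pV A" and "\<forall>x y. {x, y} \<in> pE A \<longleftrightarrow> {\<sigma> x, \<sigma> y} \<in> pE A"
proof -
  have inv: "\<forall>x. \<sigma> (\<sigma> x) = x" and out: "\<forall>x. x \<notin> pV A \<longrightarrow> \<sigma> x = x"
    and V: "\<forall>x\<in>pV A. \<sigma> x \<in> pV A" and E: "\<forall>x\<in>pV A. \<forall>y\<in>pV A. {x, y} \<in> pE A \<longleftrightarrow> {\<sigma> x, \<sigma> y} \<in> pE A"
    using \<sigma> unfolding lab_involution_def lab_iso_def by (auto dest: bij_betw_apply)
  show "\<sigma> ` pV A = pV A" using involution_image_eq[OF inv V] .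
  have verts: "x \<in> pV A \<and> y \<in> pV A" if "{x, y} \<in> pE A" for x y
    using finite_graph_edge_verts[OF fg] that by (simp add: Del_def)
  show "\<forall>x y. {x, y} \<in> pE A \<longleftrightarrow> {\<sigma> x, \<sigma> y} \<in> pE A"
  proof (intro allI)
    fix x y
    show "{x, y} \<in> pE A \<longleftrightarrow> {\<sigma> x, \<sigma> y} \<in> pE A"
    proof (cases "x \<in> pV A \<and> y \<in> pV A")
      case False
      then have "\<sigma> x \<notin> pV A \<or> \<sigma> y \<notin> pV A" using out by auto
      then show ?thesis using False verts by blast
    qed (use E in blast)
  qed
qed

lemma dec_of_wd_tensor:
  assumes "wd_tensor n G \<le> enat k"
  obtains t where "is_dec_of G k t" and "dheight t \<le> n"
proof -
  let ?P = "\<lambda>k'. \<exists>t. is_dec_of G k' t \<and> dheight t \<le> n"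
  have ex: "\<exists>k'. ?P k'" using assms unfolding wd_tensor_def by (auto split: if_splits)
  then have "(LEAST k'. ?P k') \<le> k" using assms unfolding wd_tensor_def by auto
  moreover obtain t where "is_dec_of G (LEAST k'. ?P k') t" "dheight t \<le> n" using LeastI_ex[OF ex] by blast
  ultimately show ?thesis using that valid_dec_mono unfolding is_dec_of_def by blast
qed

lemma is_dec_of_root: "is_dec_of G k t \<Longrightarrow> fst G = pV (root_pg t) \<and> snd G = pE (root_pg t)"
  unfolding is_dec_of_def Del_def by auto

lemma MSO_orderable_imp_bounded_size:
  assumes wd: "\<forall>G\<in>C. wd_tensor n G \<le> enat k" and "MSO_orderable C"
  shows "bounded_size C"
proof -
  obtain \<phi> m where fv: "fv2 \<phi> \<subseteq> {..<m}" and ord: "\<forall>G\<in>C. fst G \<noteq> {} \<longrightarrow>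
      (\<exists>P. (\<forall>i<m. P i \<subseteq> fst G) \<and>
        linear_order_on (fst G) {(a, b). a \<in> fst G \<and> b \<in> fst G \<and> sat G (\<lambda>i. if i = 0 then a else b) P \<phi>})"
    using assms(2) unfolding MSO_orderable_def by blast
  obtain B where B: "\<forall>t L. valid_dec k t \<longrightarrow> dheight t \<le> n \<longrightarrow>
    (\<forall>x\<in>pV (root_pg t). set (L x) \<subseteq> {..<max k 2} \<and> length (L x) = m) \<longrightarrow> B < card (pV (root_pg t)) \<longrightarrow>
    (\<exists>\<sigma>. lab_involution L (root_pg t) \<sigma> \<and> (\<exists>a\<in>pV (root_pg t). \<sigma> a \<noteq> a))"
    using large_dec_has_lab_involution[of k "max k 2" n m] by auto
  have "card (fst G) \<le> B" if G: "G \<in> C" for G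
  proof (rule ccontr)
    assume big: "\<not> card (fst G) \<le> B"
    obtain t where t: "is_dec_of G k t" "dheight t \<le> n" using dec_of_wd_tensor wd G by blast
    have V: "fst G = pV (root_pg t)" and E: "snd G = pE (root_pg t)" using is_dec_of_root[OF t(1)] by auto
    have vt: "valid_dec k t" using t(1) by (simp add: is_dec_of_def)
    obtain P where P: "\<forall>i<m. P i \<subseteq> fst G" and lin: "linear_order_on (fst G)
        {(a, b). a \<in> fst G \<and> b \<in> fst G \<and> sat G (\<lambda>i. if i = 0 then a else b) P \<phi>}"
      using ord G big by fastforce
    define Lab where "Lab x = map (\<lambda>i. if x \<in> P i then 1 else 0 :: nat) [0..<m]" for x
    obtain \<sigma> a where \<sigma>: "lab_involution Lab (root_pg t) \<sigma>" and a: "a \<in> pV (root_pg t)" "\<sigma> a \<noteq> a"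
    proof -
      have "\<forall>x\<in>pV (root_pg t). set (Lab x) \<subseteq> {..<max k 2} \<and> length (Lab x) = m"
        by (auto simp: Lab_def)
      then show ?thesis using B[rule_format, of t Lab, OF vt t(2)] big V that by auto
    qed
    have fg: "finite_graph (Del (root_pg t))" using valid_dec_root[OF vt] by (simp add: ports_in_def)
    note aut = lab_involution_automorphism[OF \<sigma> fg]
    have memP: "\<sigma> x \<in> P i \<longleftrightarrow> x \<in> P i" if "x \<in> pV (root_pg t)" "i < m" for x i
    proof -
      have "Lab (\<sigma> x) ! i = Lab x ! i" using \<sigma> that(1) unfolding lab_involution_def lab_iso_def by simp
      then show ?thesis using that(2) by (simp add: Lab_def split: if_splits)
    qed
    have "\<sigma> ` P X = P X" if X: "X \<in> fv2 \<phi>" for X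
    proof (rule involution_image_eq)
      have "X < m" using fv X by auto
      then show "\<forall>x\<in>P X. \<sigma> x \<in> P X" using memP P V by blast
    qed (use \<sigma> in \<open>simp add: lab_involution_def\<close>)
    then have "\<sigma> a = a"
      using definable_order_rigid[OF lin _ _ _ _ a(1)[folded V]] \<sigma> aut V E
      unfolding lab_involution_def by auto
    then show False using a(2) by blast
  qed
  then show ?thesis unfolding bounded_size_def by blast
qed

lemma cut_rep_le_card:
  assumes fin: "finite (fst G)" and "cut_rep G K m"
  shows "m \<le> card (fst G)"
proof -
  obtain Hs R where Hs: "length Hs = m" "\<forall>H\<in>set Hs. pV H \<noteq> {} \<and> ports_in K H" "disjoint_ops Hs"
    and iso: "graph_iso G (tensor_Del R Hs)"
    using assms(2) unfolding cut_rep_def by blast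
  have V: "fst (tensor_Del R Hs) = (\<Union>H\<in>set Hs. pV H)" by (simp add: tensor_Del_def)
  have "card (fst G) = card (\<Union>H\<in>set Hs. pV H)" using graph_iso_card_eq[OF iso] V by simp
  moreover have "finite (\<Union>H\<in>set Hs. pV H)"
    using Hs(2) by (auto simp: ports_in_def finite_graph_def Del_def)
  ultimately show ?thesis using length_le_card_disjoint_ops[OF Hs(3)] Hs(1,2) by simp
qed

lemma cut_rep_le_Cut: "finite (fst G) \<Longrightarrow> cut_rep G K m \<Longrightarrow> m \<le> Cut G K"
  unfolding Cut_def by (rule Greatest_le_nat[where b = "card (fst G)"]) (auto intro: cut_rep_le_card)

text \<open>If no representation exists at all, \<open>Cut G K\<close> is the junk value \<open>GREATEST m. False\<close>.\<close>

lemma Cut_le_card: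
  assumes fin: "finite (fst G)"
  shows "Cut G K \<le> max (card (fst G)) (GREATEST m::nat. False)"
proof (cases "\<exists>m. cut_rep G K m")
  case True
  then obtain m where "cut_rep G K m" by blast
  then have "cut_rep G K (Cut G K)"
    unfolding Cut_def by (rule GreatestI_nat) (rule cut_rep_le_card[OF fin])
  then show ?thesis using cut_rep_le_card[OF fin] by (simp add: le_max_iff_disj)
qed (simp add: Cut_def)

lemma bounded_size_imp_has_CUT:
  assumes fin: "\<forall>G\<in>C. finite_graph G" and "bounded_size C"
  shows "has_CUT C"
proof -
  obtain N where N: "\<forall>G\<in>C. card (fst G) \<le> N" using assms(2) unfolding bounded_size_def by blast
  have "Cut G K \<le> max N (GREATEST m::nat. False)" if G: "G \<in> C" for G K
  proof -
    have "finite (fst G)" using fin G by (simp add: finite_graph_def)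
    then show ?thesis using Cut_le_card[of G K] N G by (meson le_trans max.mono order_refl)
  qed
  then show ?thesis unfolding has_CUT_def by (intro exI[of _ "\<lambda>_. max N (GREATEST m::nat. False)"]) blast
qed

definition adjacency_determined :: "nat set set \<Rightarrow> (nat \<times> nat) set \<Rightarrow> (nat \<Rightarrow> nat) \<Rightarrow> bool" where
  "adjacency_determined E P p \<longleftrightarrow>
     (\<forall>(x, y)\<in>P. \<forall>(x', y')\<in>P. p x = p x' \<longrightarrow> p y = p y' \<longrightarrow> ({x, y} \<in> E \<longleftrightarrow> {x', y'} \<in> E))"

lemma adjacency_determined_relation:
  assumes "adjacency_determined E P p" and "(x, y) \<in> P"
  shows "{x, y} \<in> E \<longleftrightarrow> (p x, p y) \<in> {(p x', p y') | x' y'. (x', y') \<in> P \<and> {x', y'} \<in> E}"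
  using assms unfolding adjacency_determined_def by fastforce

lemma doubleton_set_eqI:
  assumes "A \<subseteq> {{x, y} | x y. x \<in> V \<and> y \<in> V}" and "B \<subseteq> {{x, y} | x y. x \<in> V \<and> y \<in> V}"
    and "\<And>x y. x \<in> V \<Longrightarrow> y \<in> V \<Longrightarrow> {x, y} \<in> A \<longleftrightarrow> {x, y} \<in> B"
  shows "A = B"
  using assms by blast

lemma cut_rep_of_partition:
  assumes fg: "finite_graph (V, E)" and P: "partition_on V \<P>" and p: "\<forall>x\<in>V. p x < K"
    and adj: "adjacency_determined E {(x, y). \<exists>B\<in>\<P>. \<exists>B'\<in>\<P>. B \<noteq> B' \<and> x \<in> B \<and> y \<in> B'} p"
  shows "cut_rep (V, E) K (card \<P>)"
proof -
  define cross where "cross = {(x, y). \<exists>B\<in>\<P>. \<exists>B'\<in>\<P>. B \<noteq> B' \<and> x \<in> B \<and> y \<in> B'}"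
  define R where "R = {(p x, p y) | x y. (x, y) \<in> cross \<and> {x, y} \<in> E}"
  define mk where "mk B = \<lparr>pV = B, pE = {e \<in> E. e \<subseteq> B}, pl = p\<rparr>" for B
  have V: "V = \<Union>\<P>" and dj: "disjoint \<P>" and ne: "{} \<notin> \<P>" using P by (auto simp: partition_on_def)
  have finV: "finite V" and Esub: "E \<subseteq> {{x, y} | x y. x \<in> V \<and> y \<in> V \<and> x \<noteq> y}"
    using fg by (auto simp: finite_graph_def)
  obtain Bs where Bs: "set Bs = \<P>" "distinct Bs"
    using finite_distinct_list finite_UnionD finV V by metis
  have mk: "pV (mk B) = B" "pE (mk B) = {e \<in> E. e \<subseteq> B}" "pl (mk B) = p" for B by (simp_all add: mk_def)
  define Hs where "Hs = map mk Bs"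
  have "length Hs = card \<P>" using distinct_card[OF Bs(2)] Bs(1) by (simp add: Hs_def)
  moreover have parts: "pV H \<noteq> {} \<and> ports_in K H" if H: "H \<in> set Hs" for H
  proof -
    obtain B where B: "B \<in> \<P>" "H = mk B" using H Bs(1) by (auto simp: Hs_def)
    then have "B \<subseteq> V" using V by blast
    then have "finite B" using finV by (rule finite_subset)
    moreover have "{e \<in> E. e \<subseteq> B} \<subseteq> {{x, y} | x y. x \<in> B \<and> y \<in> B \<and> x \<noteq> y}"
    proof
      fix e assume "e \<in> {e \<in> E. e \<subseteq> B}"
      then obtain x y where "e = {x, y}" "x \<noteq> y" "e \<subseteq> B" using Esub by blast
      then show "e \<in> {{x, y} | x y. x \<in> B \<and> y \<in> B \<and> x \<noteq> y}" by blast
    qed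
    ultimately show ?thesis using B ne p \<open>B \<subseteq> V\<close> by (auto simp: mk_def ports_in_def finite_graph_def Del_def)
  qed
  moreover have djH: "disjoint_ops Hs"
    unfolding disjoint_ops_def
  proof (intro allI impI)
    fix i j assume ij: "i < length Hs" "j < length Hs" "i \<noteq> j"
    then have "Bs!i \<in> \<P>" "Bs!j \<in> \<P>" "Bs!i \<noteq> Bs!j"
      using Bs nth_eq_iff_index_eq[OF Bs(2)] by (auto simp: Hs_def)
    then have "disjnt (Bs!i) (Bs!j)" using pairwiseD[OF dj] by blast
    then show "pV (Hs!i) \<inter> pV (Hs!j) = {}" using ij by (simp add: Hs_def mk_def disjnt_def)
  qed
  moreover have "tensor_Del R Hs = (V, E)"
  proof -
    have setH: "set Hs = mk ` \<P>" using Bs(1) by (simp add: Hs_def)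
    have "fst (tensor_Del R Hs) = V" using V by (auto simp: tensor_Del_def setH mk_def)
    moreover have "snd (tensor_Del R Hs) = E"
    proof (rule doubleton_set_eqI[where V = V])
      have "pE H \<subseteq> E" if "H \<in> set Hs" for H using that by (auto simp: setH mk_def)
      moreover have "pV (Hs!i) \<subseteq> V" if "i < length Hs" for i
        using nth_mem[OF that] V by (auto simp: setH mk_def)
      ultimately show "snd (tensor_Del R Hs) \<subseteq> {{x, y} | x y. x \<in> V \<and> y \<in> V}"
        using Esub unfolding tensor_Del_def by (simp; blast)
      show "E \<subseteq> {{x, y} | x y. x \<in> V \<and> y \<in> V}" using Esub by blast
      fix x y assume "x \<in> V" "y \<in> V"
      then obtain B B' where B: "B \<in> \<P>" "x \<in> B" and B': "B' \<in> \<P>" "y \<in> B'" using V by blast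
      have "\<forall>H\<in>set Hs. finite_graph (Del H)" using parts by (simp add: ports_in_def)
      then have lhs: "{x, y} \<in> snd (tensor_Del R Hs) \<longleftrightarrow> (if mk B = mk B' then {x, y} \<in> pE (mk B)
          else (p x, p y) \<in> R \<or> (p y, p x) \<in> R)"
        using tensor_Del_edge_iff[OF djH, of "mk B" x "mk B'" y R] B B' by (simp add: setH mk)
      show "{x, y} \<in> snd (tensor_Del R Hs) \<longleftrightarrow> {x, y} \<in> E"
      proof (cases "B = B'")
        case True
        then show ?thesis using lhs B B' by (simp add: mk_def)
      next
        case False
        then have "(x, y) \<in> cross" "(y, x) \<in> cross" using B B' unfolding cross_def by blast+
        then have "{x, y} \<in> E \<longleftrightarrow> (p x, p y) \<in> R" "{y, x} \<in> E \<longleftrightarrow> (p y, p x) \<in> R"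
          using adjacency_determined_relation[OF adj[folded cross_def]] unfolding R_def by blast+
        moreover have "mk B \<noteq> mk B'" using False by (simp add: mk_def)
        ultimately show ?thesis using lhs by (simp add: insert_commute)
      qed
    qed
    ultimately show ?thesis by (metis prod.collapse)
  qed
  ultimately show ?thesis unfolding cut_rep_def graph_iso_def by (metis bij_betw_id id_apply)
qed

lemma encode_pair_inj:
  fixes a b a' b' m :: nat
  assumes "a * m + b = a' * m + b'" "b < m" "b' < m"
  shows "a = a'" and "b = b'"
proof -
  have "(a * m + b) div m = a" "(a * m + b) mod m = b" "(a' * m + b') div m = a'" "(a' * m + b') mod m = b'"
    using assms(2,3) by simp_all
  then show "a = a'" and "b = b'" using assms(1) by metis+
qed

definition child_port :: "(pgraph \<times> (nat \<times> nat) set) dtree list \<Rightarrow> nat \<Rightarrow> nat" where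
  "child_port ts x = pl (root_pg (SOME c. c \<in> set ts \<and> x \<in> pV (root_pg c))) x"

lemma child_port_eq:
  assumes v: "valid_dec k (DNode (H, R) ts)" and c: "c \<in> set ts" "x \<in> pV (root_pg c)"
  shows "child_port ts x = pl (root_pg c) x"
proof -
  have "(SOME c. c \<in> set ts \<and> x \<in> pV (root_pg c)) = c"
    using children_disjoint[OF v] c by (intro some_equality) blast+
  then show ?thesis by (simp add: child_port_def)
qed

lemma child_port_less:
  assumes v: "valid_dec k (DNode (H, R) ts)" and ne: "ts \<noteq> []" and x: "x \<in> pV H"
  shows "child_port ts x < k"
proof -
  obtain c where c: "c \<in> set ts" "x \<in> pV (root_pg c)" using x pV_node[OF v ne] by blast
  then show ?thesis
    using child_port_eq[OF v c] valid_dec_root[OF valid_dec_child[OF v c(1)]] by (simp add: ports_in_def)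
qed

lemma node_edge_child_port:
  assumes v: "valid_dec k (DNode (H, R) ts)" and c: "c \<in> set ts" "x \<in> pV (root_pg c)"
    and y: "y \<in> pV H" "y \<notin> pV (root_pg c)"
  shows "{x, y} \<in> pE H \<longleftrightarrow>
    (child_port ts x, child_port ts y) \<in> R \<or> (child_port ts y, child_port ts x) \<in> R"
proof -
  have "ts \<noteq> []" using c by auto
  then obtain d where d: "d \<in> set ts" "y \<in> pV (root_pg d)" using y pV_node[OF v] by blast
  then have "c \<noteq> d" using y(2) by blast
  then show ?thesis using node_edge_iff[OF v c d] child_port_eq[OF v c] child_port_eq[OF v d] by simp
qed

text \<open>If a labelling \<open>q\<close> of a child \<open>c\<close> with fewer than \<open>B\<close> values determines the edges leaving
  \<open>W \<subseteq> V(c)\<close> inside \<open>c\<close>, then pairing it with the port labels of the children determines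
  the edges leaving \<open>W\<close> in the parent: an edge to a sibling only depends on the two ports.\<close>

lemma adjacency_determined_parent:
  assumes v: "valid_dec k (DNode (H, R) ts)" and c: "c \<in> set ts" and W: "W \<subseteq> pV (root_pg c)"
    and qB: "\<forall>x\<in>pV (root_pg c). q x < B"
    and q: "adjacency_determined (pE (root_pg c)) (W \<times> (pV (root_pg c) - W)) q"
  defines "p \<equiv> \<lambda>x. (if x \<in> pV (root_pg c) then q x else B) * (k + 1) + child_port ts x"
  shows "\<forall>x\<in>pV H. p x < (B + 1) * (k + 1)"
    and "adjacency_determined (pE H) (W \<times> (pV H - W)) p"
proof -
  have ne: "ts \<noteq> []" using c by auto
  have cp: "child_port ts x < k + 1" if "x \<in> pV H" for x using child_port_less[OF v ne that] by simp
  have cH: "pV (root_pg c) \<subseteq> pV H" using pV_node[OF v ne] c by blast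
  show "\<forall>x\<in>pV H. p x < (B + 1) * (k + 1)"
  proof
    fix x assume x: "x \<in> pV H"
    define a where "a = (if x \<in> pV (root_pg c) then q x else B)"
    have "a \<le> B" using qB by (simp add: a_def less_imp_le)
    have "p x < (a + 1) * (k + 1)" using cp[OF x] by (simp add: p_def a_def)
    also have "\<dots> \<le> (B + 1) * (k + 1)" using \<open>a \<le> B\<close> by (intro mult_le_mono1) simp
    finally show "p x < (B + 1) * (k + 1)" .
  qed
  have decode: "(if x \<in> pV (root_pg c) then q x else B) = (if x' \<in> pV (root_pg c) then q x' else B)
      \<and> child_port ts x = child_port ts x'"
    if "x \<in> pV H" "x' \<in> pV H" "p x = p x'" for x x'
    using encode_pair_inj[OF that(3)[unfolded p_def] cp[OF that(1)] cp[OF that(2)]] by blast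
  show "adjacency_determined (pE H) (W \<times> (pV H - W)) p"
    unfolding adjacency_determined_def
  proof (clarify)
    fix x y x' y' assume x: "x \<in> W" "x' \<in> W" and y: "y \<in> pV H" "y \<notin> W" "y' \<in> pV H" "y' \<notin> W"
      and px: "p x = p x'" and py: "p y = p y'"
    have xc: "x \<in> pV (root_pg c)" "x' \<in> pV (root_pg c)" using x W by auto
    then have qx: "q x = q x'" and cpx: "child_port ts x = child_port ts x'"
      using decode[OF _ _ px] cH by auto
    have dy: "(if y \<in> pV (root_pg c) then q y else B) = (if y' \<in> pV (root_pg c) then q y' else B)"
      and cpy: "child_port ts y = child_port ts y'" using decode[OF y(1) y(3) py] by auto
    show "{x, y} \<in> pE H \<longleftrightarrow> {x', y'} \<in> pE H"
    proof (cases "y \<in> pV (root_pg c)")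
      case True
      have y'c: "y' \<in> pV (root_pg c)"
      proof (rule ccontr)
        assume "y' \<notin> pV (root_pg c)"
        then show False using dy True qB by auto
      qed
      then have "(x, y) \<in> W \<times> (pV (root_pg c) - W)" "(x', y') \<in> W \<times> (pV (root_pg c) - W)" "q y = q y'"
        using x y True dy by auto
      then have "{x, y} \<in> pE (root_pg c) \<longleftrightarrow> {x', y'} \<in> pE (root_pg c)"
        using q qx unfolding adjacency_determined_def by blast
      then show ?thesis using node_edge_iff[OF v c xc(1) c True] node_edge_iff[OF v c xc(2) c y'c] by simp
    next
      case False
      have "y' \<notin> pV (root_pg c)"
      proof
        assume "y' \<in> pV (root_pg c)"
        then show False using dy False qB by auto
      qed
      then show ?thesis
        using node_edge_child_port[OF v c xc(1) y(1) False] node_edge_child_port[OF v c xc(2) y(3)]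
          cpx cpy by simp
    qed
  qed
qed

fun port_bound :: "nat \<Rightarrow> nat \<Rightarrow> nat" where
  "port_bound k 0 = 1"
| "port_bound k (Suc h) = (port_bound k h + 1) * (k + 1)"

lemma port_bound_pos: "0 < port_bound k h"
  by (induction h) auto

lemma subtree_adjacency_determined:
  assumes "valid_dec k t" and "dheight t \<le> h" and "v \<in> subtrees t"
  shows "\<exists>p. (\<forall>x\<in>pV (root_pg t). p x < port_bound k h) \<and>
    adjacency_determined (pE (root_pg t)) (pV (root_pg v) \<times> (pV (root_pg t) - pV (root_pg v))) p"
  using assms
proof (induction arbitrary: h v rule: valid_dec.induct)
  case (node H ts R)
  have t: "valid_dec k (DNode (H, R) ts)" by (rule valid_dec.node) (use node in auto)
  show ?case
  proof (cases "v = DNode (H, R) ts")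
    case True
    then show ?thesis
      using port_bound_pos by (intro exI[of _ "\<lambda>_. 0"]) (auto simp: adjacency_determined_def)
  next
    case False
    then obtain c where c: "c \<in> set ts" "v \<in> subtrees c" using node.prems(2) by auto
    obtain h' where h: "h = Suc h'" using node.prems(1) node.hyps(2) by (cases h) auto
    then have "dheight c \<le> h'" using dheight_child_less[OF c(1)] node.prems(1) by simp
    then obtain q where qB: "\<forall>x\<in>pV (root_pg c). q x < port_bound k h'"
      and q: "adjacency_determined (pE (root_pg c)) (pV (root_pg v) \<times> (pV (root_pg c) - pV (root_pg v))) q"
      using node.IH c by blast
    note W = valid_dec_subtree(2)[OF valid_dec_child[OF t c(1)] c(2)]
    show ?thesis
      using adjacency_determined_parent[OF t c(1) W qB q] h
      by (intro exI[of _ "\<lambda>x. (if x \<in> pV (root_pg c) then q x else port_bound k h') * (k + 1)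
        + child_port ts x"]) simp
  qed
qed (use port_bound_pos in \<open>auto intro!: exI[of _ "\<lambda>_. 0"] simp: adjacency_determined_def\<close>)

lemma adjacency_determined_subset:
  "adjacency_determined E P p \<Longrightarrow> P' \<subseteq> P \<Longrightarrow> adjacency_determined E P' p"
  unfolding adjacency_determined_def by blast

lemma subtree_edge_child_port:
  assumes t: "valid_dec k t" and v: "DNode (Hv, Rv) cs \<in> subtrees t"
    and c: "c \<in> set cs" "x \<in> pV (root_pg c)" and y: "y \<in> pV Hv" "y \<notin> pV (root_pg c)"
  shows "{x, y} \<in> pE (root_pg t) \<longleftrightarrow>
    (child_port cs x, child_port cs y) \<in> Rv \<or> (child_port cs y, child_port cs x) \<in> Rv"
proof -
  have vv: "valid_dec k (DNode (Hv, Rv) cs)" using valid_dec_subtree(1)[OF t v] .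
  have "cs \<noteq> []" using c by auto
  then have "x \<in> pV Hv" using pV_node[OF vv] c by auto
  then have "{x, y} \<in> pE (root_pg t) \<longleftrightarrow> {x, y} \<in> pE Hv" using valid_dec_subtree(3)[OF t v] y by simp
  then show ?thesis using node_edge_child_port[OF vv c y] by simp
qed

lemma node_adjacency_determined:
  assumes t: "valid_dec k t" and v: "DNode (Hv, Rv) cs \<in> subtrees t" and ne: "cs \<noteq> []"
    and q: "adjacency_determined (pE (root_pg t)) (pV Hv \<times> (pV (root_pg t) - pV Hv)) q"
  defines "p \<equiv> \<lambda>x. q x * (k + 1) + (if x \<in> pV Hv then child_port cs x else k)"
  shows "adjacency_determined (pE (root_pg t))
    {(x, y). x \<in> pV (root_pg t) \<and> y \<in> pV (root_pg t) \<and> (x \<in> pV Hv \<or> y \<in> pV Hv) \<and>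
      \<not> (\<exists>c\<in>set cs. x \<in> pV (root_pg c) \<and> y \<in> pV (root_pg c))} p"
  unfolding adjacency_determined_def
proof (clarify)
  have vv: "valid_dec k (DNode (Hv, Rv) cs)" using valid_dec_subtree(1)[OF t v] .
  have r: "(if z \<in> pV Hv then child_port cs z else k) < k + 1" for z
    using child_port_less[OF vv ne, of z] by auto
  have decode: "q x = q x' \<and> (x \<in> pV Hv \<longleftrightarrow> x' \<in> pV Hv) \<and> (x \<in> pV Hv \<longrightarrow> child_port cs x = child_port cs x')"
    if "p x = p x'" for x x'
  proof -
    have "q x = q x'" and "(if x \<in> pV Hv then child_port cs x else k) = (if x' \<in> pV Hv then child_port cs x' else k)"
      using encode_pair_inj[OF that[unfolded p_def] r r] by blast+
    then show ?thesis
      using child_port_less[OF vv ne, of x] child_port_less[OF vv ne, of x'] by (auto split: if_splits)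
  qed
  have inner: "{x, y} \<in> pE (root_pg t) \<longleftrightarrow>
      (child_port cs x, child_port cs y) \<in> Rv \<or> (child_port cs y, child_port cs x) \<in> Rv"
    if xy: "x \<in> pV Hv" "y \<in> pV Hv" "\<not> (\<exists>c\<in>set cs. x \<in> pV (root_pg c) \<and> y \<in> pV (root_pg c))"
    for x y
  proof -
    obtain c where "c \<in> set cs" "x \<in> pV (root_pg c)" using xy(1) pV_node[OF vv ne] by blast
    then show ?thesis using subtree_edge_child_port[OF t v] xy by blast
  qed
  have outer: "{x, y} \<in> pE (root_pg t) \<longleftrightarrow> {x', y'} \<in> pE (root_pg t)"
    if "x \<in> pV Hv" "x' \<in> pV Hv" "y \<in> pV (root_pg t) - pV Hv" "y' \<in> pV (root_pg t) - pV Hv"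
      "q x = q x'" "q y = q y'" for x y x' y'
    using q that unfolding adjacency_determined_def by blast
  fix x y x' y'
  assume xy: "x \<in> pV (root_pg t)" "y \<in> pV (root_pg t)" "x \<in> pV Hv \<or> y \<in> pV Hv"
      "\<not> (\<exists>c\<in>set cs. x \<in> pV (root_pg c) \<and> y \<in> pV (root_pg c))"
    and xy': "x' \<in> pV (root_pg t)" "y' \<in> pV (root_pg t)" "x' \<in> pV Hv \<or> y' \<in> pV Hv"
      "\<not> (\<exists>c\<in>set cs. x' \<in> pV (root_pg c) \<and> y' \<in> pV (root_pg c))"
    and px: "p x = p x'" and py: "p y = p y'"
  have dx: "q x = q x'" "x \<in> pV Hv \<longleftrightarrow> x' \<in> pV Hv" "x \<in> pV Hv \<Longrightarrow> child_port cs x = child_port cs x'"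
    using decode[OF px] by blast+
  have dy: "q y = q y'" "y \<in> pV Hv \<longleftrightarrow> y' \<in> pV Hv" "y \<in> pV Hv \<Longrightarrow> child_port cs y = child_port cs y'"
    using decode[OF py] by blast+
  consider "x \<in> pV Hv" "y \<in> pV Hv" | "x \<in> pV Hv" "y \<notin> pV Hv" | "x \<notin> pV Hv" "y \<in> pV Hv"
    using xy(3) by blast
  then show "{x, y} \<in> pE (root_pg t) \<longleftrightarrow> {x', y'} \<in> pE (root_pg t)"
  proof cases
    case 1
    then show ?thesis using inner[OF _ _ xy(4)] inner[OF _ _ xy'(4)] dx dy by simp
  next
    case 2
    then show ?thesis using outer[OF _ _ _ _ dx(1) dy(1)] xy(2) xy'(2) dx(2) dy(2) by blast
  next
    case 3
    then have "{y, x} \<in> pE (root_pg t) \<longleftrightarrow> {y', x'} \<in> pE (root_pg t)"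
      using outer[OF _ _ _ _ dy(1) dx(1)] xy(1) xy'(1) dx(2) dy(2) by blast
    then show ?thesis by (simp add: insert_commute)
  qed
qed

lemma card_children_verts:
  assumes v: "valid_dec k (DNode (H, R) ts)"
  shows "card ((\<lambda>c. pV (root_pg c)) ` set ts) = length ts"
proof -
  have "inj_on (\<lambda>c. pV (root_pg c)) (set ts)"
  proof (rule inj_onI)
    fix c c' assume c: "c \<in> set ts" "c' \<in> set ts" and eq: "pV (root_pg c) = pV (root_pg c')"
    show "c = c'"
    proof (rule ccontr)
      assume "c \<noteq> c'"
      then have "pV (root_pg c) = {}" using children_disjoint[OF v c] eq by simp
      then show False using valid_dec_root[OF valid_dec_child[OF v c(1)]] by simp
    qed
  qed
  then show ?thesis using distinct_card[OF distinct_children[OF v]] by (simp add: card_image)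
qed

lemma partition_on_children:
  assumes v: "valid_dec k (DNode (H, R) ts)" and ne: "ts \<noteq> []" and HV: "pV H \<subseteq> V"
  shows "partition_on V ((\<lambda>c. pV (root_pg c)) ` set ts \<union> (if V - pV H = {} then {} else {V - pV H}))"
proof (rule partition_onI)
  have cH: "pV (root_pg c) \<subseteq> pV H" if "c \<in> set ts" for c using pV_node[OF v ne] that by blast
  show "\<Union> ((\<lambda>c. pV (root_pg c)) ` set ts \<union> (if V - pV H = {} then {} else {V - pV H})) = V"
    using pV_node[OF v ne] HV by auto
  show "{} \<notin> (\<lambda>c. pV (root_pg c)) ` set ts \<union> (if V - pV H = {} then {} else {V - pV H})"
    using valid_dec_root[OF valid_dec_child[OF v]] by auto
  fix B B' assume "B \<in> (\<lambda>c. pV (root_pg c)) ` set ts \<union> (if V - pV H = {} then {} else {V - pV H})"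
    "B' \<in> (\<lambda>c. pV (root_pg c)) ` set ts \<union> (if V - pV H = {} then {} else {V - pV H})" "B \<noteq> B'"
  then show "disjnt B B'" using children_disjoint[OF v] cH
    by (auto simp: disjnt_def split: if_splits)
qed

lemma length_children_le_Cut:
  assumes t: "valid_dec k t" and h: "dheight t \<le> h" and v: "DNode (Hv, Rv) cs \<in> subtrees t"
  shows "length cs \<le> Cut (Del (root_pg t)) (port_bound k h * (k + 1))"
proof (cases "cs = []")
  case False
  let ?V = "pV (root_pg t)" and ?E = "pE (root_pg t)"
  have vv: "valid_dec k (DNode (Hv, Rv) cs)" and HV: "pV Hv \<subseteq> ?V"
    using valid_dec_subtree[OF t v] by auto
  obtain q where qB: "\<forall>x\<in>?V. q x < port_bound k h" and q: "adjacency_determined ?E (pV Hv \<times> (?V - pV Hv)) q"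
    using subtree_adjacency_determined[OF t h v] by auto
  define \<P> where "\<P> = (\<lambda>c. pV (root_pg c)) ` set cs \<union> (if ?V - pV Hv = {} then {} else {?V - pV Hv})"
  define p where "p x = q x * (k + 1) + (if x \<in> pV Hv then child_port cs x else k)" for x
  have part: "partition_on ?V \<P>" unfolding \<P>_def by (rule partition_on_children[OF vv False HV])
  have fg: "finite_graph (?V, ?E)" using valid_dec_root[OF t] by (simp add: ports_in_def Del_def)
  have "p x < port_bound k h * (k + 1)" if "x \<in> ?V" for x
  proof -
    have "p x < (q x + 1) * (k + 1)" using child_port_less[OF vv False, of x] by (auto simp: p_def)
    also have "\<dots> \<le> port_bound k h * (k + 1)" using qB that by (intro mult_le_mono1) (simp add: Suc_leI)
    finally show ?thesis .
  qed
  moreover have "adjacency_determined ?E {(x, y). \<exists>B\<in>\<P>. \<exists>B'\<in>\<P>. B \<noteq> B' \<and> x \<in> B \<and> y \<in> B'} p"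
    unfolding p_def
  proof (rule adjacency_determined_subset[OF node_adjacency_determined[OF t v False q]])
    have block: "B = B'" if "B \<in> \<P>" "B' \<in> \<P>" "x \<in> B" "x \<in> B'" for B B' x
    proof (rule ccontr)
      assume "B \<noteq> B'"
      then have "disjnt B B'" using pairwiseD[OF partition_onD2[OF part]] that(1,2) by blast
      then show False using that(3,4) by (auto simp: disjnt_def)
    qed
    have child: "B = pV (root_pg c)" if "B \<in> \<P>" "z \<in> B" "c \<in> set cs" "z \<in> pV (root_pg c)" for B z c
      using block[OF that(1) _ that(2) that(4)] that(3) by (simp add: \<P>_def)
    have outside: "B = ?V - pV Hv" if "B \<in> \<P>" "z \<in> B" "z \<in> ?V" "z \<notin> pV Hv" for B z
    proof -
      have "?V - pV Hv \<in> \<P>" using that(3,4) by (auto simp: \<P>_def)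
      then show ?thesis using block[OF that(1) _ that(2), of "?V - pV Hv"] that(3,4) by blast
    qed
    show "{(x, y). \<exists>B\<in>\<P>. \<exists>B'\<in>\<P>. B \<noteq> B' \<and> x \<in> B \<and> y \<in> B'} \<subseteq>
        {(x, y). x \<in> ?V \<and> y \<in> ?V \<and> (x \<in> pV Hv \<or> y \<in> pV Hv) \<and>
          \<not> (\<exists>c\<in>set cs. x \<in> pV (root_pg c) \<and> y \<in> pV (root_pg c))}"
    proof (clarify)
      fix x y B B' assume B: "B \<in> \<P>" "B' \<in> \<P>" "B \<noteq> B'" "x \<in> B" "y \<in> B'"
      then have V: "x \<in> ?V" "y \<in> ?V" using partition_onD1[OF part] by auto
      then show "x \<in> ?V \<and> y \<in> ?V \<and> (x \<in> pV Hv \<or> y \<in> pV Hv) \<and>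
          \<not> (\<exists>c\<in>set cs. x \<in> pV (root_pg c) \<and> y \<in> pV (root_pg c))"
        using child[OF B(1,4)] child[OF B(2,5)] outside[OF B(1,4)] outside[OF B(2,5)] B(3) by metis
    qed
  qed
  ultimately have "cut_rep (?V, ?E) (port_bound k h * (k + 1)) (card \<P>)"
    using cut_rep_of_partition[OF fg part] by blast
  then have "card \<P> \<le> Cut (Del (root_pg t)) (port_bound k h * (k + 1))"
    using cut_rep_le_Cut fg by (simp add: Del_def finite_graph_def)
  moreover have "card ((\<lambda>c. pV (root_pg c)) ` set cs) \<le> card \<P>"
    by (rule card_mono) (auto simp: \<P>_def)
  ultimately show ?thesis using card_children_verts[OF vv] by linarith
qed simp

lemma has_CUT_imp_bounded_outdeg:
  assumes wd: "\<forall>G\<in>C. wd_tensor n G \<le> enat k" and "has_CUT C"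
  shows "\<exists>d. \<forall>G\<in>C. \<exists>t. is_dec_of G k t \<and> dheight t \<le> n \<and> outdeg_le d t"
proof -
  obtain f where f: "\<forall>G\<in>C. \<forall>K. Cut G K \<le> f K" using assms(2) unfolding has_CUT_def by blast
  have "\<exists>t. is_dec_of G k t \<and> dheight t \<le> n \<and> outdeg_le (f (port_bound k n * (k + 1))) t"
    if G: "G \<in> C" for G
  proof -
    obtain t where t: "is_dec_of G k t" "dheight t \<le> n" using dec_of_wd_tensor wd G by blast
    have vt: "valid_dec k t" and DG: "Del (root_pg t) = G" using t(1) by (auto simp: is_dec_of_def)
    have "length cs \<le> f (port_bound k n * (k + 1))" if "DNode (Hv, Rv) cs \<in> subtrees t" for Hv Rv cs
    proof -
      have "length cs \<le> Cut G (port_bound k n * (k + 1))" using length_children_le_Cut[OF vt t(2) that] DG by simp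
      also have "\<dots> \<le> f (port_bound k n * (k + 1))" using f G by blast
      finally show ?thesis .
    qed
    then have "outdeg_le (f (port_bound k n * (k + 1))) t"
      unfolding outdeg_le_iff_subtrees by (metis dchildren.simps dtree.exhaust surj_pair)
    then show ?thesis using t by blast
  qed
  then show ?thesis by blast
qed

lemma bounded_size_imp_bounded_outdeg:
  assumes wd: "\<forall>G\<in>C. wd_tensor n G \<le> enat k" and "bounded_size C"
  shows "\<exists>d. \<forall>G\<in>C. \<exists>t. is_dec_of G k t \<and> dheight t \<le> n \<and> outdeg_le d t"
proof -
  obtain N where N: "\<forall>G\<in>C. card (fst G) \<le> N" using assms(2) unfolding bounded_size_def by blast
  have "\<exists>t. is_dec_of G k t \<and> dheight t \<le> n \<and> outdeg_le N t" if G: "G \<in> C" for G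
  proof -
    obtain t where t: "is_dec_of G k t" "dheight t \<le> n" using dec_of_wd_tensor wd G by blast
    have vt: "valid_dec k t" using t(1) by (simp add: is_dec_of_def)
    have fin: "finite (pV (root_pg t))" using valid_dec_root[OF vt] by (simp add: ports_in_def finite_graph_def Del_def)
    have "length cs \<le> N" if v: "DNode (Hv, Rv) cs \<in> subtrees t" for Hv Rv cs
    proof -
      have "length cs \<le> card (pV Hv)" using length_children_le_card valid_dec_subtree(1)[OF vt v] by blast
      also have "\<dots> \<le> card (pV (root_pg t))" using card_mono[OF fin] valid_dec_subtree(2)[OF vt v] by simp
      also have "\<dots> = card (fst G)" using is_dec_of_root[OF t(1)] by simp
      also have "\<dots> \<le> N" using N G by blast
      finally show ?thesis .
    qed
    then have "outdeg_le N t" unfolding outdeg_le_iff_subtrees by (metis dchildren.simps dtree.exhaust surj_pair)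
    then show ?thesis using t by blast
  qed
  then show ?thesis by blast
qed

lemma bounded_outdeg_imp_bounded_size:
  assumes "\<exists>d. \<forall>G\<in>C. \<exists>t. is_dec_of G k t \<and> dheight t \<le> n \<and> outdeg_le d t"
  shows "bounded_size C"
proof -
  obtain d where d: "\<forall>G\<in>C. \<exists>t. is_dec_of G k t \<and> dheight t \<le> n \<and> outdeg_le d t" using assms by blast
  have "card (fst G) \<le> max d 1 ^ n" if G: "G \<in> C" for G
  proof -
    obtain t where t: "is_dec_of G k t" "dheight t \<le> n" "outdeg_le d t" using d G by blast
    have "card (fst G) = card (pV (root_pg t))" using is_dec_of_root[OF t(1)] by simp
    also have "\<dots> \<le> max d 1 ^ dheight t"
      using card_le_outdeg_power[OF _ t(3)] t(1) unfolding is_dec_of_def by blast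
    also have "\<dots> \<le> max d 1 ^ n" using t(2) by (intro power_increasing) simp_all
    finally show ?thesis .
  qed
  then show ?thesis unfolding bounded_size_def by blast
qed

theorem theorem5p22:
  fixes n k :: nat and C :: "graph set"
  assumes "\<forall>G\<in>C. finite_graph G"
    and "\<forall>G\<in>C. wd_tensor n G \<le> enat k"
  shows "(MSO_orderable C \<longleftrightarrow> has_CUT C)
       \<and> (has_CUT C \<longleftrightarrow>
            (\<exists>d. \<forall>G\<in>C. \<exists>t. is_dec_of G k t \<and> dheight t \<le> n \<and> outdeg_le d t))
       \<and> ((\<exists>d. \<forall>G\<in>C. \<exists>t. is_dec_of G k t \<and> dheight t \<le> n \<and> outdeg_le d t)
            \<longleftrightarrow> finite_up_to_iso C)"
proof -
  have "MSO_orderable C \<longleftrightarrow> bounded_size C"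
    using MSO_orderable_imp_bounded_size[OF assms(2)] bounded_size_imp_MSO_orderable[OF assms(1)] by blast
  moreover have "has_CUT C \<longleftrightarrow> bounded_size C"
    using has_CUT_imp_bounded_outdeg[OF assms(2)] bounded_outdeg_imp_bounded_size
      bounded_size_imp_has_CUT[OF assms(1)] by blast
  moreover have "(\<exists>d. \<forall>G\<in>C. \<exists>t. is_dec_of G k t \<and> dheight t \<le> n \<and> outdeg_le d t) \<longleftrightarrow> bounded_size C"
    using bounded_outdeg_imp_bounded_size bounded_size_imp_bounded_outdeg[OF assms(2)] by blast
  ultimately show ?thesis using finite_up_to_iso_iff_bounded_size[OF assms(1)] by blast
qed

end
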